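(* Let $\Omega\subset\mathbb{R}^n$ be a bounded domain of class $C^2$. Assume that $\mu, c\in L^\infty(\Omega)$, $h\in L^r(\Omega)$ for some $r>\max(1,n/2)$, that $\mu,c,h\ge0$ a.e. and none of them vanishes identically, and that there exist $x_0\in\Omega$ and $\rho,\eta>0$ with $B(x_0,\rho)\subset\Omega$ and $\mu\ge\eta$, $c\ge\eta$ a.e. on $B(x_0,\rho)$. Let $0<\Lambda_1\le\gamma_1$. Then there exists a constant $C>0$ (depending on $\eta,\rho$ and the data, but independent of $u$ and $\lambda$) such that for every $\lambda\in[\Lambda_1,\gamma_1]$, any nonnegative solution $u$ of $(P_\lambda)$ satisfies $$\int_{B_{\rho/2}(x_0)}e^{\eta u}\le C.$$
   Context: For $\lambda\in\mathbb{R}$, problem $(P_\lambda)$ is: $-\Delta u=\mu(x)|\nabla u|^2+\lambda c(x)u+h(x)$ in $\Omega$, $u\in H^1_0(\Omega)\cap L^\infty(\Omega)$, understood in the weak sense with test functions in $H^1_0(\Omega)\cap L^\infty(\Omega)$; nonnegative means $u\ge0$ a.e. $\gamma_1>0$ is the first eigenvalue of the weighted problem $-\Delta\varphi=\gamma c(x)\varphi$, $\varphi\in H^1_0(\Omega)$. *)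

theory Defs
  imports "HOL-Analysis.Analysis"
begin

definition dderiv :: "'a::euclidean_space \<Rightarrow> ('a \<Rightarrow> real) \<Rightarrow> 'a \<Rightarrow> real" where
  "dderiv v f x = frechet_derivative f (at x) v"

definition cgrad :: "('a::euclidean_space \<Rightarrow> real) \<Rightarrow> 'a \<Rightarrow> 'a" where
  "cgrad f x = (\<Sum>b\<in>Basis. dderiv b f x *\<^sub>R b)"

definition smooth_fun :: "('a::euclidean_space \<Rightarrow> real) \<Rightarrow> bool" where
  "smooth_fun f \<longleftrightarrow> (\<forall>vs. set vs \<subseteq> Basis \<longrightarrow> (\<forall>x. foldr dderiv vs f differentiable (at x)))"

definition test_fun :: "'a::euclidean_space set \<Rightarrow> ('a \<Rightarrow> real) \<Rightarrow> bool" where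
  "test_fun \<Omega> f \<longleftrightarrow> smooth_fun f \<and> (\<exists>K. compact K \<and> K \<subseteq> \<Omega> \<and> (\<forall>x. x \<notin> K \<longrightarrow> f x = 0))"

definition C2_fun :: "('a::euclidean_space \<Rightarrow> real) \<Rightarrow> bool" where
  "C2_fun f \<longleftrightarrow> (\<forall>x. f differentiable (at x)) \<and>
     (\<forall>b1\<in>Basis. (\<forall>x. dderiv b1 f differentiable (at x)) \<and>
        (\<forall>b2\<in>Basis. continuous_on UNIV (dderiv b2 (dderiv b1 f))))"

definition C2_bounded_domain :: "'a::euclidean_space set \<Rightarrow> bool" where
  "C2_bounded_domain \<Omega> \<longleftrightarrow> open \<Omega> \<and> connected \<Omega> \<and> \<Omega> \<noteq> {} \<and> bounded \<Omega> \<and>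
     (\<forall>p\<in>frontier \<Omega>. \<exists>r>0. \<exists>\<psi>. C2_fun \<psi> \<and> cgrad \<psi> p \<noteq> 0 \<and>
         \<Omega> \<inter> ball p r = {x \<in> ball p r. \<psi> x < 0})"

definition Lp_on :: "real \<Rightarrow> 'a::euclidean_space set \<Rightarrow> ('a \<Rightarrow> real) \<Rightarrow> bool" where
  "Lp_on p \<Omega> f \<longleftrightarrow> set_borel_measurable lebesgue \<Omega> f \<and>
     set_integrable lebesgue \<Omega> (\<lambda>x. \<bar>f x\<bar> powr p)"

definition Linf_on :: "'a::euclidean_space set \<Rightarrow> ('a \<Rightarrow> real) \<Rightarrow> bool" where
  "Linf_on \<Omega> f \<longleftrightarrow> set_borel_measurable lebesgue \<Omega> f \<and>
     (\<exists>M. AE x in lebesgue. x \<in> \<Omega> \<longrightarrow> \<bar>f x\<bar> \<le> M)"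

text \<open>u belongs to H^1_0(Omega) with (weak) gradient G: u, G in L^2(Omega) and
  u is the H^1-limit of test functions (closure of C_c^infinity in H^1).\<close>
definition H10 :: "'a::euclidean_space set \<Rightarrow> ('a \<Rightarrow> real) \<Rightarrow> ('a \<Rightarrow> 'a) \<Rightarrow> bool" where
  "H10 \<Omega> u G \<longleftrightarrow>
     set_borel_measurable lebesgue \<Omega> u \<and> set_integrable lebesgue \<Omega> (\<lambda>x. (u x)\<^sup>2) \<and>
     set_borel_measurable lebesgue \<Omega> G \<and> set_integrable lebesgue \<Omega> (\<lambda>x. (norm (G x))\<^sup>2) \<and>
     (\<exists>\<phi>. (\<forall>k. test_fun \<Omega> (\<phi> k)) \<and>
        (\<lambda>k. set_lebesgue_integral lebesgue \<Omega>
               (\<lambda>x. (\<phi> k x - u x)\<^sup>2 + (norm (cgrad (\<phi> k) x - G x))\<^sup>2)) \<longlonglongrightarrow> 0)"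

definition is_solution :: "'a::euclidean_space set \<Rightarrow> ('a \<Rightarrow> real) \<Rightarrow> ('a \<Rightarrow> real) \<Rightarrow>
    ('a \<Rightarrow> real) \<Rightarrow> real \<Rightarrow> ('a \<Rightarrow> real) \<Rightarrow> bool" where
  "is_solution \<Omega> \<mu> c h lam u \<longleftrightarrow>
     (\<exists>G. H10 \<Omega> u G \<and> Linf_on \<Omega> u \<and>
        (\<forall>v Gv. H10 \<Omega> v Gv \<and> Linf_on \<Omega> v \<longrightarrow>
           set_lebesgue_integral lebesgue \<Omega> (\<lambda>x. G x \<bullet> Gv x) =
           set_lebesgue_integral lebesgue \<Omega>
             (\<lambda>x. (\<mu> x * (norm (G x))\<^sup>2 + lam * c x * u x + h x) * v x)))"

definition weighted_eigenvalue :: "'a::euclidean_space set \<Rightarrow> ('a \<Rightarrow> real) \<Rightarrow> real \<Rightarrow> bool" where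
  "weighted_eigenvalue \<Omega> c \<gamma> \<longleftrightarrow>
     (\<exists>\<phi> G. H10 \<Omega> \<phi> G \<and> \<not> (AE x in lebesgue. x \<in> \<Omega> \<longrightarrow> \<phi> x = 0) \<and>
        (\<forall>v Gv. H10 \<Omega> v Gv \<longrightarrow>
           set_lebesgue_integral lebesgue \<Omega> (\<lambda>x. G x \<bullet> Gv x) =
           \<gamma> * set_lebesgue_integral lebesgue \<Omega> (\<lambda>x. c x * \<phi> x * v x)))"

definition first_eigenvalue :: "'a::euclidean_space set \<Rightarrow> ('a \<Rightarrow> real) \<Rightarrow> real" where
  "first_eigenvalue \<Omega> c = Inf {\<gamma>. weighted_eigenvalue \<Omega> c \<gamma>}"

end

theory Submission
  imports Defs "HOL-Computational_Algebra.Polynomial"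
begin

text \<open>
  Let \<open>\<psi>\<close> be a smooth bump supported in \<open>B(x\<^sub>0, \<rho>)\<close> with \<open>-\<Delta>\<psi> \<le> K \<psi>\<close> and \<open>\<psi> \<ge> \<delta> > 0\<close> on
  \<open>B(x\<^sub>0, \<rho>/2)\<close>, and test the equation with \<open>F(u) \<psi>\<close>, where \<open>F(t) = e\<^sup>\<eta>\<^sup>t / (1 + \<epsilon> e\<^sup>\<eta>\<^sup>t)\<close> is a
  bounded Lipschitz substitute for \<open>e\<^sup>\<eta>\<^sup>t\<close>. Since \<open>F' \<le> \<eta> F\<close> and \<open>\<mu>, c \<ge> \<eta>\<close> on the support of \<open>\<psi>\<close>,
  the quadratic gradient term absorbs \<open>F'(u) \<psi> |\<nabla>u|\<^sup>2\<close> and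
  \<open>\<Lambda>\<^sub>1 \<eta> \<integral> u F(u) \<psi> \<le> \<integral> F(u) \<nabla>u\<cdot>\<nabla>\<psi> = -\<integral> H(u) \<Delta>\<psi> \<le> (K/\<eta>) \<integral> e\<^sup>\<eta>\<^sup>u \<psi>\<close>, \<open>H\<close> a primitive
  of \<open>F\<close>. With \<open>\<epsilon>\<close> small this gives \<open>\<Lambda>\<^sub>1 \<eta>/2 \<integral> u e\<^sup>\<eta>\<^sup>u \<psi> \<le> (K/\<eta>) \<integral> e\<^sup>\<eta>\<^sup>u \<psi>\<close>, and splitting
  \<open>\<Omega>\<close> at the level \<open>u = T = 4K/(\<Lambda>\<^sub>1 \<eta>\<^sup>2)\<close> yields \<open>\<integral> e\<^sup>\<eta>\<^sup>u \<psi> \<le> 2 e\<^sup>\<eta>\<^sup>T \<integral> \<psi>\<close>, a bound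
  independent of \<open>u\<close> and \<open>\<lambda>\<close>.

  \<open>H\<^sup>1\<^sub>0(\<Omega>)\<close> is the closure of the test functions, so the chain rule and the vanishing mean of
  weak derivatives are derived by approximation, working in the finite measure space \<open>lebesgue_on \<Omega>\<close>.
\<close>

section \<open>Smooth functions\<close>

lemma has_derivative_imp_dderiv: "(f has_derivative f') (at x) \<Longrightarrow> dderiv v f x = f' v"
  unfolding dderiv_def by (metis frechet_derivative_at)

lemma smooth_funI:
  assumes "P f" "\<And>g x. P g \<Longrightarrow> g differentiable (at x)"
    "\<And>g b. P g \<Longrightarrow> b \<in> Basis \<Longrightarrow> P (dderiv b g)"
  shows "smooth_fun f"
proof -
  have "\<forall>vs. set vs \<subseteq> Basis \<longrightarrow> P (foldr dderiv vs f)"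
  proof
    fix vs :: "'a list" show "set vs \<subseteq> Basis \<longrightarrow> P (foldr dderiv vs f)"
      by (induction vs) (auto simp: assms)
  qed
  then show ?thesis unfolding smooth_fun_def using assms(2) by blast
qed

inductive_set fun_alg :: "('a::euclidean_space \<Rightarrow> real) set \<Rightarrow> ('a \<Rightarrow> real) set" for Gen where
  gen: "g \<in> Gen \<Longrightarrow> g \<in> fun_alg Gen"
| const: "(\<lambda>x. k) \<in> fun_alg Gen"
| add: "f \<in> fun_alg Gen \<Longrightarrow> g \<in> fun_alg Gen \<Longrightarrow> (\<lambda>x. f x + g x) \<in> fun_alg Gen"
| mult: "f \<in> fun_alg Gen \<Longrightarrow> g \<in> fun_alg Gen \<Longrightarrow> (\<lambda>x. f x * g x) \<in> fun_alg Gen"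

lemma fun_alg_differentiable:
  assumes "\<And>g x. g \<in> Gen \<Longrightarrow> g differentiable (at x)"
  shows "f \<in> fun_alg Gen \<Longrightarrow> f differentiable (at x)"
  by (induction rule: fun_alg.induct) (auto simp: assms)

lemma dderiv_add: "f differentiable (at x) \<Longrightarrow> g differentiable (at x) \<Longrightarrow>
   dderiv b (\<lambda>x. f x + g x) x = dderiv b f x + dderiv b g x"
  unfolding differentiable_def
  by (auto intro!: has_derivative_imp_dderiv[THEN trans] has_derivative_add simp: has_derivative_imp_dderiv)

lemma dderiv_mult: "f differentiable (at x) \<Longrightarrow> g differentiable (at x) \<Longrightarrow>
   dderiv b (\<lambda>x. f x * g x) x = f x * dderiv b g x + dderiv b f x * g x"
  unfolding differentiable_def
  by (auto intro!: has_derivative_imp_dderiv[THEN trans] has_derivative_mult simp: has_derivative_imp_dderiv)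

lemma dderiv_const: "dderiv b (\<lambda>x. k) x = 0"
  by (rule has_derivative_imp_dderiv[THEN trans]) (auto intro: has_derivative_const)

lemma fun_alg_dderiv:
  assumes "\<And>g x. g \<in> Gen \<Longrightarrow> g differentiable (at x)"
    and "\<And>g. g \<in> Gen \<Longrightarrow> dderiv b g \<in> fun_alg Gen"
  shows "f \<in> fun_alg Gen \<Longrightarrow> dderiv b f \<in> fun_alg Gen"
proof (induction rule: fun_alg.induct)
  case (gen g) then show ?case using assms by auto
next
  case (const k)
  have "dderiv b (\<lambda>x. k) = (\<lambda>x. 0)" by (rule ext, rule dderiv_const)
  then show ?case by (simp add: fun_alg.const)
next
  case (add f g)
  have "dderiv b (\<lambda>x. f x + g x) = (\<lambda>x. dderiv b f x + dderiv b g x)"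
    by (rule ext, rule dderiv_add) (use add fun_alg_differentiable assms in auto)
  then show ?case using add by (simp add: fun_alg.add)
next
  case (mult f g)
  have "dderiv b (\<lambda>x. f x * g x) = (\<lambda>x. f x * dderiv b g x + dderiv b f x * g x)"
    by (rule ext, rule dderiv_mult) (use mult fun_alg_differentiable assms in auto)
  then show ?case using mult by (simp add: fun_alg.mult fun_alg.add)
qed

lemma smooth_fun_alg:
  assumes "\<And>g x. g \<in> Gen \<Longrightarrow> g differentiable (at x)"
    and "\<And>g b. g \<in> Gen \<Longrightarrow> b \<in> Basis \<Longrightarrow> dderiv b g \<in> fun_alg Gen"
    and "f \<in> fun_alg Gen"
  shows "smooth_fun f"
proof (rule smooth_funI[where P="\<lambda>f. f \<in> fun_alg Gen"])
  show "f \<in> fun_alg Gen" by fact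
  show "g differentiable (at x)" if "g \<in> fun_alg Gen" for g x
    using fun_alg_differentiable[OF assms(1) that] by blast
  show "dderiv b g \<in> fun_alg Gen" if "g \<in> fun_alg Gen" "b \<in> Basis" for g b
    using fun_alg_dderiv[of Gen b g] assms(1,2) that by blast
qed

lemma smooth_fun_differentiable: "smooth_fun f \<Longrightarrow> f differentiable (at x)"
  unfolding smooth_fun_def by (metis empty_subsetI foldr_Nil id_apply list.set(1))

lemma smooth_fun_dderiv:
  assumes "smooth_fun f" "b \<in> Basis" shows "smooth_fun (dderiv b f)"
proof -
  have "foldr dderiv vs (dderiv b f) differentiable at x" if "set vs \<subseteq> Basis" for vs x
  proof -
    have "set (vs @ [b]) \<subseteq> Basis" using that assms(2) by auto
    then have "foldr dderiv (vs @ [b]) f differentiable at x" using assms(1) unfolding smooth_fun_def by blast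
    then show ?thesis by simp
  qed
  then show ?thesis unfolding smooth_fun_def by blast
qed

lemma smooth_fun_continuous: "smooth_fun f \<Longrightarrow> continuous_on UNIV f"
  by (meson continuous_at_imp_continuous_on differentiable_imp_continuous_within smooth_fun_differentiable)

definition iterated_dderivs :: "('a::euclidean_space \<Rightarrow> real) \<Rightarrow> ('a \<Rightarrow> real) set" where
  "iterated_dderivs f = {foldr dderiv vs f | vs. set vs \<subseteq> Basis}"

lemma iterated_dderivs_self: "f \<in> iterated_dderivs f"
  unfolding iterated_dderivs_def by (rule CollectI, rule exI[of _ "[]"]) simp

lemma iterated_dderivs_differentiable: "smooth_fun f \<Longrightarrow> g \<in> iterated_dderivs f \<Longrightarrow> g differentiable (at x)"
  unfolding iterated_dderivs_def smooth_fun_def by auto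

lemma dderiv_iterated_dderivs: "g \<in> iterated_dderivs f \<Longrightarrow> b \<in> Basis \<Longrightarrow> dderiv b g \<in> iterated_dderivs f"
proof -
  assume "g \<in> iterated_dderivs f" "b \<in> Basis"
  then obtain vs where "g = foldr dderiv vs f" "set vs \<subseteq> Basis" unfolding iterated_dderivs_def by auto
  then show ?thesis unfolding iterated_dderivs_def using \<open>b \<in> Basis\<close> by (auto intro!: exI[of _ "b # vs"])
qed

lemma smooth_fun_mult:
  assumes "smooth_fun f" "smooth_fun g"
  shows "smooth_fun (\<lambda>x. f x * g x)"
proof (rule smooth_fun_alg[where Gen="iterated_dderivs f \<union> iterated_dderivs g"])
  show "(\<lambda>x. f x * g x) \<in> fun_alg (iterated_dderivs f \<union> iterated_dderivs g)"
    by (intro fun_alg.mult fun_alg.gen) (auto simp: iterated_dderivs_self)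
qed (use assms iterated_dderivs_differentiable dderiv_iterated_dderivs fun_alg.gen in blast)+

definition deriv_tower :: "(nat \<Rightarrow> real \<Rightarrow> real) \<Rightarrow> bool" where
  "deriv_tower Fs \<longleftrightarrow> (\<forall>k t. (Fs k has_real_derivative Fs (Suc k) t) (at t))"

lemma smooth_fun_comp:
  assumes "deriv_tower Fs" "smooth_fun \<phi>"
  shows "smooth_fun (\<lambda>x. Fs k (\<phi> x))"
proof -
  define Gen where "Gen = range (\<lambda>k x. Fs k (\<phi> x)) \<union> iterated_dderivs \<phi>"
  have d: "((\<lambda>x. Fs k (\<phi> x)) has_derivative (\<lambda>h. frechet_derivative \<phi> (at x) h * Fs (Suc k) (\<phi> x))) (at x)" for k x
    by (rule DERIV_compose_FDERIV)
       (use assms in \<open>auto simp: deriv_tower_def frechet_derivative_works[symmetric] smooth_fun_differentiable\<close>)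
  have "g differentiable (at x)" if "g \<in> Gen" for g x
    using that d iterated_dderivs_differentiable[OF assms(2)] differentiable_def unfolding Gen_def by blast
  moreover have "dderiv b g \<in> fun_alg Gen" if g: "g \<in> Gen" and b: "b \<in> Basis" for g b
  proof (cases "g \<in> iterated_dderivs \<phi>")
    case True then show ?thesis using dderiv_iterated_dderivs[OF True b] by (auto intro: fun_alg.gen simp: Gen_def)
  next
    case False
    then obtain k where gk: "g = (\<lambda>x. Fs k (\<phi> x))" using g by (auto simp: Gen_def)
    have "dderiv b \<phi> \<in> Gen" "(\<lambda>x. Fs (Suc k) (\<phi> x)) \<in> Gen"
      using dderiv_iterated_dderivs[OF iterated_dderivs_self b] by (auto simp: Gen_def)
    then have "(\<lambda>x. dderiv b \<phi> x * Fs (Suc k) (\<phi> x)) \<in> fun_alg Gen" by (intro fun_alg.mult fun_alg.gen)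
    moreover have "dderiv b g = (\<lambda>x. dderiv b \<phi> x * Fs (Suc k) (\<phi> x))"
      unfolding gk by (rule ext) (simp add: has_derivative_imp_dderiv[OF d] dderiv_def)
    ultimately show ?thesis by simp
  qed
  moreover have "(\<lambda>x. Fs k (\<phi> x)) \<in> fun_alg Gen" by (rule fun_alg.gen) (simp add: Gen_def)
  ultimately show ?thesis by (rule smooth_fun_alg)
qed

section \<open>A smooth bump function\<close>

text \<open>The derivative of \<open>poly P (1/s) * exp (-1/s)\<close> has the same shape, with the polynomial \<open>flat_exp_dpoly P\<close>;
  as \<open>poly Q y * exp (-y) \<rightarrow> 0\<close>, all of these glue smoothly to \<open>0\<close> at \<open>s = 0\<close>.\<close>
definition flat_exp :: "real poly \<Rightarrow> real \<Rightarrow> real" where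
  "flat_exp P s = (if s > 0 then poly P (1/s) * exp (-1/s) else 0)"

definition flat_exp_dpoly :: "real poly \<Rightarrow> real poly" where
  "flat_exp_dpoly P = [:0,0,1:] * (P - pderiv P)"

lemma tendsto_poly_times_exp_neg: "((\<lambda>y. poly p y * exp (-y)) \<longlongrightarrow> (0::real)) at_top"
proof -
  have "((\<lambda>y. \<Sum>i\<le>degree p. coeff p i * (y ^ i / exp y)) \<longlongrightarrow> (\<Sum>i\<le>degree p. coeff p i * 0)) at_top"
    by (intro tendsto_sum tendsto_mult tendsto_const tendsto_power_div_exp_0)
  moreover have "poly p y * exp (-y) = (\<Sum>i\<le>degree p. coeff p i * (y ^ i / exp y))" for y
  proof -
    have "poly p y * exp (-y) = (\<Sum>i\<le>degree p. coeff p i * y ^ i) / exp y"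
      by (simp add: poly_altdef exp_minus field_simps)
    also have "\<dots> = (\<Sum>i\<le>degree p. coeff p i * (y ^ i / exp y))"
      by (simp add: sum_divide_distrib)
    finally show ?thesis .
  qed
  ultimately show ?thesis by simp
qed

lemma flat_exp_has_real_derivative_pos:
  assumes "s > 0"
  shows "(flat_exp P has_real_derivative flat_exp (flat_exp_dpoly P) s) (at s)"
proof -
  have d: "((\<lambda>s. poly P (1/s) * exp (-1/s)) has_real_derivative
      (poly (pderiv P) (1/s) * (- 1 / s^2)) * exp (-1/s) + poly P (1/s) * (exp (-1/s) * (1/s^2))) (at s)"
    using assms
    by (auto intro!: derivative_eq_intros simp: power2_eq_square field_simps)
  have e: "(poly (pderiv P) (1/s) * (- 1 / s^2)) * exp (-1/s) + poly P (1/s) * (exp (-1/s) * (1/s^2))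
      = flat_exp (flat_exp_dpoly P) s"
    using assms by (simp add: flat_exp_def flat_exp_dpoly_def algebra_simps power2_eq_square field_simps)
  show ?thesis
    by (rule has_field_derivative_transform_within_open[where S="{0<..}"])
       (use d[unfolded e] assms in \<open>auto simp: flat_exp_def\<close>)
qed

lemma flat_exp_has_real_derivative_neg:
  assumes "s < 0"
  shows "(flat_exp P has_real_derivative flat_exp (flat_exp_dpoly P) s) (at s)"
proof -
  have "((\<lambda>s. 0) has_real_derivative 0) (at s)" by simp
  then have "(flat_exp P has_real_derivative 0) (at s)"
    by (rule has_field_derivative_transform_within_open[where S="{..<0}"]) (use assms in \<open>auto simp: flat_exp_def\<close>)
  moreover have "flat_exp (flat_exp_dpoly P) s = 0" using assms by (simp add: flat_exp_def)
  ultimately show ?thesis by simp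
qed

lemma flat_exp_has_real_derivative_0: "(flat_exp P has_real_derivative flat_exp (flat_exp_dpoly P) 0) (at 0)"
proof -
  have "flat_exp (flat_exp_dpoly P) 0 = 0" by (simp add: flat_exp_def)
  moreover have "((\<lambda>y. (flat_exp P y - flat_exp P 0) / (y - 0)) \<longlongrightarrow> 0) (at (0::real))"
  proof (subst filterlim_at_split, rule conjI)
    show "((\<lambda>y. (flat_exp P y - flat_exp P 0) / (y - 0)) \<longlongrightarrow> 0) (at_left (0::real))"
    proof (rule Lim_transform_eventually[OF tendsto_const])
      show "\<forall>\<^sub>F x in at_left 0. 0 = (flat_exp P x - flat_exp P 0) / (x - 0)"
        unfolding eventually_at_left_field by (auto simp: flat_exp_def intro!: exI[of _ "-1"])
    qed
    have lim: "((\<lambda>y. poly ([:0,1:] * P) y * exp (-y)) \<longlongrightarrow> 0) at_top"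
      by (rule tendsto_poly_times_exp_neg)
    have "((\<lambda>x. poly ([:0,1:] * P) (inverse x) * exp (- inverse x)) \<longlongrightarrow> 0) (at_right (0::real))"
      by (rule filterlim_compose[OF lim filterlim_inverse_at_top_right])
    then show "((\<lambda>y. (flat_exp P y - flat_exp P 0) / (y - 0)) \<longlongrightarrow> 0) (at_right (0::real))"
    proof (rule Lim_transform_eventually)
      show "\<forall>\<^sub>F x in at_right 0. poly ([:0,1:] * P) (inverse x) * exp (- inverse x) =
          (flat_exp P x - flat_exp P 0) / (x - 0)"
        unfolding eventually_at_right_field
        by (auto simp: flat_exp_def field_simps intro!: exI[of _ 1])
    qed
  qed
  ultimately show ?thesis by (simp add: has_field_derivative_iff)
qed

lemma flat_exp_has_real_derivative: "(flat_exp P has_real_derivative flat_exp (flat_exp_dpoly P) s) (at s)"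
  using flat_exp_has_real_derivative_pos flat_exp_has_real_derivative_neg flat_exp_has_real_derivative_0
  by (cases "s > 0"; cases "s < 0") (auto simp: not_less)

definition ball_gap :: "'a::euclidean_space \<Rightarrow> real \<Rightarrow> 'a \<Rightarrow> real" where
  "ball_gap x0 R x = R\<^sup>2 - (x - x0) \<bullet> (x - x0)"

definition bump :: "'a::euclidean_space \<Rightarrow> real \<Rightarrow> 'a \<Rightarrow> real" where
  "bump x0 R x = flat_exp 1 (ball_gap x0 R x)"

lemma ball_gap_has_derivative: "(ball_gap x0 R has_derivative (\<lambda>h. - (2 * ((x - x0) \<bullet> h)))) (at x)"
  unfolding ball_gap_def
  by (auto intro!: derivative_eq_intros simp: inner_commute)

lemma flat_exp_ball_gap_has_derivative: "((\<lambda>x. flat_exp P (ball_gap x0 R x)) has_derivative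
    (\<lambda>h. - (2 * ((x - x0) \<bullet> h)) * flat_exp (flat_exp_dpoly P) (ball_gap x0 R x))) (at x)"
  by (rule DERIV_compose_FDERIV[OF flat_exp_has_real_derivative ball_gap_has_derivative])

lemma coordinate_has_derivative: "((\<lambda>x. (x - x0) \<bullet> b) has_derivative (\<lambda>h. h \<bullet> b)) (at x)"
  by (auto intro!: derivative_eq_intros)

lemma dderiv_flat_exp_ball_gap: "dderiv b (\<lambda>x. flat_exp P (ball_gap x0 R x)) =
    (\<lambda>x. flat_exp (flat_exp_dpoly P) (ball_gap x0 R x) * ((-2) * ((x - x0) \<bullet> b)))"
  by (rule ext, subst has_derivative_imp_dderiv[OF flat_exp_ball_gap_has_derivative]) simp

lemma dderiv_coordinate: "dderiv b' (\<lambda>x. (x - x0) \<bullet> b) = (\<lambda>x. b' \<bullet> b)"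
  by (rule ext, rule has_derivative_imp_dderiv[OF coordinate_has_derivative])

definition bump_generators :: "'a::euclidean_space \<Rightarrow> real \<Rightarrow> ('a \<Rightarrow> real) set" where
  "bump_generators x0 R = range (\<lambda>P x. flat_exp P (ball_gap x0 R x)) \<union> range (\<lambda>b x. (x - x0) \<bullet> b)"

lemma bump_generators_differentiable: "g \<in> bump_generators x0 R \<Longrightarrow> g differentiable (at x)"
  unfolding bump_generators_def differentiable_def using flat_exp_ball_gap_has_derivative coordinate_has_derivative by blast

lemma dderiv_bump_generators: "g \<in> bump_generators x0 R \<Longrightarrow> dderiv b g \<in> fun_alg (bump_generators x0 R)"
proof -
  assume "g \<in> bump_generators x0 R"
  then consider P where "g = (\<lambda>x. flat_exp P (ball_gap x0 R x))" | c where "g = (\<lambda>x. (x - x0) \<bullet> c)"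
    unfolding bump_generators_def by blast
  then show ?thesis
  proof cases
    case 1
    show ?thesis unfolding 1 dderiv_flat_exp_ball_gap
      by (intro fun_alg.mult fun_alg.gen fun_alg.const) (auto simp: bump_generators_def)
  next
    case 2
    show ?thesis unfolding 2 dderiv_coordinate by (rule fun_alg.const)
  qed
qed

lemma smooth_fun_bump: "smooth_fun (bump x0 R)"
proof (rule smooth_fun_alg[where Gen="bump_generators x0 R"])
  show "bump x0 R \<in> fun_alg (bump_generators x0 R)"
    unfolding bump_def[abs_def] by (rule fun_alg.gen) (auto simp: bump_generators_def)
qed (auto intro: bump_generators_differentiable dderiv_bump_generators)

definition laplacian :: "('a::euclidean_space \<Rightarrow> real) \<Rightarrow> 'a \<Rightarrow> real" where
  "laplacian f x = (\<Sum>b\<in>Basis. dderiv b (dderiv b f) x)"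

lemma laplacian_bump: fixes x0 :: "'a::euclidean_space" shows "laplacian (bump x0 R) x =
   4 * flat_exp (flat_exp_dpoly (flat_exp_dpoly 1)) (ball_gap x0 R x) * ((x - x0) \<bullet> (x - x0))
   - 2 * real DIM('a) * flat_exp (flat_exp_dpoly 1) (ball_gap x0 R x)"
proof -
  have e: "dderiv b (dderiv b (bump x0 R)) x =
     4 * flat_exp (flat_exp_dpoly (flat_exp_dpoly 1)) (ball_gap x0 R x) * ((x - x0) \<bullet> b)\<^sup>2 - 2 * flat_exp (flat_exp_dpoly 1) (ball_gap x0 R x)"
    if "b \<in> Basis" for b :: 'a
  proof -
    have "dderiv b (bump x0 R) = (\<lambda>x. flat_exp (flat_exp_dpoly 1) (ball_gap x0 R x) * ((-2) * ((x - x0) \<bullet> b)))"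
      unfolding bump_def[abs_def] by (rule dderiv_flat_exp_ball_gap)
    moreover have "((\<lambda>x. flat_exp (flat_exp_dpoly 1) (ball_gap x0 R x) * ((-2) * ((x - x0) \<bullet> b))) has_derivative
        (\<lambda>h. flat_exp (flat_exp_dpoly 1) (ball_gap x0 R x) * ((-2) * (h \<bullet> b)) +
             (- (2 * ((x - x0) \<bullet> h)) * flat_exp (flat_exp_dpoly (flat_exp_dpoly 1)) (ball_gap x0 R x)) * ((-2) * ((x - x0) \<bullet> b)))) (at x)"
      by (rule has_derivative_mult[OF flat_exp_ball_gap_has_derivative has_derivative_mult[OF has_derivative_const coordinate_has_derivative], THEN has_derivative_eq_rhs])
         (auto simp: algebra_simps)
    ultimately show ?thesis
      using that by (simp add: has_derivative_imp_dderiv power2_eq_square algebra_simps inner_commute)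
  qed
  have s: "(\<Sum>b\<in>Basis. ((x - x0) \<bullet> b)\<^sup>2) = (x - x0) \<bullet> (x - x0)"
    by (subst euclidean_inner[of "x - x0" "x - x0"]) (simp add: power2_eq_square)
  have "laplacian (bump x0 R) x = (\<Sum>b\<in>Basis. 4 * flat_exp (flat_exp_dpoly (flat_exp_dpoly 1)) (ball_gap x0 R x) * ((x - x0) \<bullet> b)\<^sup>2 - 2 * flat_exp (flat_exp_dpoly 1) (ball_gap x0 R x))"
    unfolding laplacian_def by (rule sum.cong[OF refl]) (rule e)
  also have "\<dots> = 4 * flat_exp (flat_exp_dpoly (flat_exp_dpoly 1)) (ball_gap x0 R x) * (\<Sum>b\<in>Basis. ((x - x0) \<bullet> b)\<^sup>2) - real DIM('a) * (2 * flat_exp (flat_exp_dpoly 1) (ball_gap x0 R x))"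
    by (simp only: sum_subtractf sum_distrib_left[symmetric] sum_constant)
  finally show ?thesis unfolding s by simp
qed

lemma poly_flat_exp_dpoly: "poly (flat_exp_dpoly P) y = y\<^sup>2 * (poly P y - poly (pderiv P) y)"
  by (simp add: flat_exp_dpoly_def power2_eq_square)

lemma poly_flat_exp_dpoly_1: "poly (flat_exp_dpoly 1) y = y\<^sup>2"
  by (simp add: poly_flat_exp_dpoly)

lemma pderiv_flat_exp_dpoly_1: "pderiv (flat_exp_dpoly 1) = [:0,2:]"
  by (simp add: flat_exp_dpoly_def pderiv_pCons)

lemma poly_flat_exp_dpoly_2: "poly (flat_exp_dpoly (flat_exp_dpoly 1)) y = y^4 - 2*y^3"
  by (simp add: poly_flat_exp_dpoly pderiv_flat_exp_dpoly_1 poly_flat_exp_dpoly_1 algebra_simps power2_eq_square power3_eq_cube power4_eq_xxxx)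

definition bump_lap_const :: "real \<Rightarrow> real \<Rightarrow> real" where
  "bump_lap_const R n = ((8*R\<^sup>2+4)\<^sup>2/(4*R\<^sup>2) + 2*n)\<^sup>2/(12*R\<^sup>2)"

text \<open>With \<open>t = 1 / (R\<^sup>2 - |x - x0|\<^sup>2)\<close>, the quotient \<open>-\<Delta>bump / bump\<close> is the quartic on the left.\<close>
lemma quartic_le_bump_lap_const:
  fixes R t n :: real
  assumes "R > 0" "t > 0"
  shows "2*n*t\<^sup>2 - 4*R\<^sup>2*t^4 + (8*R\<^sup>2+4)*t^3 - 8*t\<^sup>2 \<le> bump_lap_const R n"
proof -
  define c where "c = (8*R\<^sup>2+4)\<^sup>2/(4*R\<^sup>2) + 2*n"
  define a where "a = 8*R\<^sup>2+4"
  have h1: "a * t^3 \<le> R\<^sup>2*t^4 + a\<^sup>2*t\<^sup>2/(4*R\<^sup>2)"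
  proof -
    have "0 \<le> (R*t\<^sup>2 - a*t/(2*R))\<^sup>2" by simp
    then show ?thesis using assms(1)
      by (simp add: power2_eq_square power3_eq_cube power4_eq_xxxx field_simps)
  qed
  have h2: "-3*R\<^sup>2*(t\<^sup>2)\<^sup>2 + c*t\<^sup>2 \<le> c\<^sup>2/(12*R\<^sup>2)"
  proof -
    have "0 \<le> (6*R\<^sup>2*t\<^sup>2 - c)\<^sup>2" by simp
    then show ?thesis using assms(1)
      by (simp add: power2_eq_square field_simps)
  qed
  have h3: "0 \<le> 8*t\<^sup>2" by simp
  have "2*n*t\<^sup>2 - 4*R\<^sup>2*t^4 + a*t^3 - 8*t\<^sup>2 \<le> 2*n*t\<^sup>2 - 4*R\<^sup>2*t^4 + (R\<^sup>2*t^4 + a\<^sup>2*t\<^sup>2/(4*R\<^sup>2))"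
    using h1 h3 by linarith
  also have "\<dots> = -3*R\<^sup>2*(t\<^sup>2)\<^sup>2 + c*t\<^sup>2"
    unfolding c_def a_def[symmetric] by (simp add: power2_eq_square power4_eq_xxxx algebra_simps)
  finally have "2*n*t\<^sup>2 - 4*R\<^sup>2*t^4 + a*t^3 - 8*t\<^sup>2 \<le> -3*R\<^sup>2*(t\<^sup>2)\<^sup>2 + c*t\<^sup>2" .
  then show ?thesis using h2 unfolding a_def bump_lap_const_def c_def[symmetric] by linarith
qed

lemma neg_laplacian_bump_le:
  fixes x0 :: "'a::euclidean_space"
  assumes "R > 0"
  shows "- laplacian (bump x0 R) x \<le> bump_lap_const R (real DIM('a)) * bump x0 R x"
proof (cases "ball_gap x0 R x > 0")
  case False
  then show ?thesis by (simp add: laplacian_bump bump_def flat_exp_def)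
next
  case True
  define s where "s = ball_gap x0 R x"
  define t where "t = 1/s"
  define e where "e = exp (-1/s)"
  have s: "s > 0" using True s_def by simp
  have t: "t > 0" using s t_def by simp
  have e: "e > 0" using e_def by simp
  have d: "(x - x0) \<bullet> (x - x0) = R\<^sup>2 - 1/t"
    using s_def t_def s unfolding ball_gap_def by simp
  have "- laplacian (bump x0 R) x = e * (2 * real DIM('a) * t\<^sup>2 - 4 * (t^4 - 2*t^3) * (R\<^sup>2 - 1/t))"
    unfolding laplacian_bump d[symmetric] using s
    by (simp add: flat_exp_def poly_flat_exp_dpoly_1 poly_flat_exp_dpoly_2 s_def[symmetric] t_def e_def algebra_simps)
  also have "2 * real DIM('a) * t\<^sup>2 - 4 * (t^4 - 2*t^3) * (R\<^sup>2 - 1/t) =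
      2*real DIM('a)*t\<^sup>2 - 4*R\<^sup>2*t^4 + (8*R\<^sup>2+4)*t^3 - 8*t\<^sup>2"
    using t by (simp add: power2_eq_square power3_eq_cube power4_eq_xxxx field_simps)
  also have "e * \<dots> \<le> e * bump_lap_const R (real DIM('a))"
    by (rule mult_left_mono[OF quartic_le_bump_lap_const]) (use assms t e in auto)
  also have "e = bump x0 R x" using s by (simp add: bump_def flat_exp_def s_def e_def)
  finally show ?thesis by (simp add: mult.commute)
qed

lemma bump_nonneg: "bump x0 R x \<ge> 0"
  by (simp add: bump_def flat_exp_def)

lemma bump_le_1: "bump x0 R x \<le> 1"
  by (simp add: bump_def flat_exp_def)

lemma bump_eq_0: assumes "R > 0" "x \<notin> ball x0 R" shows "bump x0 R x = 0"
proof -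
  have "R \<le> norm (x - x0)" using assms by (simp add: dist_norm norm_minus_commute)
  then have "R\<^sup>2 \<le> (norm (x - x0))\<^sup>2" using assms(1) by (intro power_mono) auto
  then show ?thesis unfolding bump_def flat_exp_def ball_gap_def dot_square_norm by auto
qed

lemma bump_ge_on_half_ball:
  assumes "\<rho> > 0" "x \<in> ball x0 (\<rho>/2)"
  shows "bump x0 (3*\<rho>/4) x \<ge> exp (-16/(5*\<rho>\<^sup>2))"
proof -
  have n: "norm (x - x0) < \<rho>/2" using assms by (simp add: dist_norm norm_minus_commute)
  then have "(norm (x - x0))\<^sup>2 \<le> (\<rho>/2)\<^sup>2"
    by (intro power_mono) auto
  then have q: "ball_gap x0 (3*\<rho>/4) x \<ge> 5*\<rho>\<^sup>2/16"
    unfolding ball_gap_def dot_square_norm by (simp add: power2_eq_square field_simps)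
  have "5*\<rho>\<^sup>2/16 > 0" using assms(1) by simp
  then have qp: "ball_gap x0 (3*\<rho>/4) x > 0" using q by linarith
  have "-16/(5*\<rho>\<^sup>2) \<le> -1 / ball_gap x0 (3*\<rho>/4) x"
    using q qp assms(1) by (simp add: field_simps)
  then show ?thesis using qp by (simp add: bump_def flat_exp_def)
qed

section \<open>A saturated exponential\<close>

text \<open>A bounded Lipschitz substitute for \<open>exp (\<eta> * t)\<close>, needed because the chain rule in \<open>H\<^sup>1\<^sub>0\<close>
  is available only for Lipschitz functions; for \<open>\<epsilon> = exp (-\<eta> * M)\<close> it stays above \<open>exp (\<eta> * t) / 2\<close>
  on \<open>[0, M]\<close>.\<close>
definition sat_exp :: "real \<Rightarrow> real \<Rightarrow> real \<Rightarrow> real" where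
  "sat_exp \<eta> \<epsilon> t = exp (\<eta> * t) / (1 + \<epsilon> * exp (\<eta> * t))"

definition sat_exp_prim :: "real \<Rightarrow> real \<Rightarrow> real \<Rightarrow> real" where
  "sat_exp_prim \<eta> \<epsilon> t = ln (1 + \<epsilon> * exp (\<eta> * t)) / (\<epsilon> * \<eta>)"

definition sat_exp_deriv :: "real \<Rightarrow> real \<Rightarrow> real \<Rightarrow> real" where
  "sat_exp_deriv \<eta> \<epsilon> t = \<eta> * sat_exp \<eta> \<epsilon> t - \<eta> * \<epsilon> * (sat_exp \<eta> \<epsilon> t)\<^sup>2"

lemma sat_exp_has_real_derivative:
  assumes "\<epsilon> > 0"
  shows "(sat_exp \<eta> \<epsilon> has_real_derivative sat_exp_deriv \<eta> \<epsilon> t) (at t)"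
proof -
  have quotient: "((\<eta> * e) * d - e * (\<epsilon> * (\<eta> * e))) / d\<^sup>2 = \<eta> * (e / d) - \<eta> * \<epsilon> * (e / d)\<^sup>2"
    if "d \<noteq> 0" for d e :: real
    using that by (simp add: field_simps power2_eq_square)
  have "1 + \<epsilon> * exp (\<eta> * t) > 0" using assms by (simp add: add_pos_pos)
  then have "(sat_exp \<eta> \<epsilon> has_real_derivative
     ((\<eta> * exp (\<eta> * t)) * (1 + \<epsilon> * exp (\<eta> * t)) - exp (\<eta> * t) * (\<epsilon> * (\<eta> * exp (\<eta> * t)))) /
       (1 + \<epsilon> * exp (\<eta> * t))\<^sup>2) (at t)"
    unfolding sat_exp_def[abs_def] by (auto intro!: derivative_eq_intros simp: power2_eq_square)
  then show ?thesis
    using \<open>1 + \<epsilon> * exp (\<eta> * t) > 0\<close> by (simp only: quotient sat_exp_deriv_def sat_exp_def)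
qed

lemma sat_exp_prim_has_real_derivative:
  assumes "\<epsilon> > 0" "\<eta> > 0"
  shows "(sat_exp_prim \<eta> \<epsilon> has_real_derivative sat_exp \<eta> \<epsilon> t) (at t)"
proof -
  have quotient: "(\<epsilon> * (\<eta> * e)) / d / (\<epsilon> * \<eta>) = e / d" for d e :: real
    using assms by (simp add: field_simps)
  have "1 + \<epsilon> * exp (\<eta> * t) > 0" using assms by (simp add: add_pos_pos)
  then have "(sat_exp_prim \<eta> \<epsilon> has_real_derivative
      (\<epsilon> * (\<eta> * exp (\<eta> * t))) / (1 + \<epsilon> * exp (\<eta> * t)) / (\<epsilon> * \<eta>)) (at t)"
    unfolding sat_exp_prim_def[abs_def] by (auto intro!: derivative_eq_intros)
  then show ?thesis by (simp only: quotient sat_exp_def)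
qed

text \<open>Since \<open>sat_exp' = \<eta> F - \<eta> \<epsilon> F\<^sup>2\<close>, every derivative of \<open>F = sat_exp\<close> is a polynomial in \<open>F\<close>.\<close>
primrec sat_exp_dpoly :: "real \<Rightarrow> real \<Rightarrow> nat \<Rightarrow> real poly" where
  "sat_exp_dpoly \<eta> \<epsilon> 0 = [:0,1:]"
| "sat_exp_dpoly \<eta> \<epsilon> (Suc k) = pderiv (sat_exp_dpoly \<eta> \<epsilon> k) * [:0, \<eta>, -\<eta>*\<epsilon>:]"

definition sat_exp_derivs :: "real \<Rightarrow> real \<Rightarrow> nat \<Rightarrow> real \<Rightarrow> real" where
  "sat_exp_derivs \<eta> \<epsilon> k t = poly (sat_exp_dpoly \<eta> \<epsilon> k) (sat_exp \<eta> \<epsilon> t)"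

definition sat_exp_prim_derivs :: "real \<Rightarrow> real \<Rightarrow> nat \<Rightarrow> real \<Rightarrow> real" where
  "sat_exp_prim_derivs \<eta> \<epsilon> k = (case k of 0 \<Rightarrow> sat_exp_prim \<eta> \<epsilon> | Suc j \<Rightarrow> sat_exp_derivs \<eta> \<epsilon> j)"

lemma sat_exp_derivs_0: "sat_exp_derivs \<eta> \<epsilon> 0 = sat_exp \<eta> \<epsilon>"
  by (rule ext) (simp add: sat_exp_derivs_def)

lemma deriv_tower_sat_exp_derivs: assumes "\<epsilon> > 0" shows "deriv_tower (sat_exp_derivs \<eta> \<epsilon>)"
  unfolding deriv_tower_def
proof (intro allI)
  fix k t
  have "((\<lambda>t. poly (sat_exp_dpoly \<eta> \<epsilon> k) (sat_exp \<eta> \<epsilon> t)) has_real_derivative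
      poly (pderiv (sat_exp_dpoly \<eta> \<epsilon> k)) (sat_exp \<eta> \<epsilon> t) * sat_exp_deriv \<eta> \<epsilon> t) (at t)"
    by (rule DERIV_chain2[OF poly_DERIV sat_exp_has_real_derivative[OF assms]])
  moreover have "poly (pderiv (sat_exp_dpoly \<eta> \<epsilon> k)) (sat_exp \<eta> \<epsilon> t) * sat_exp_deriv \<eta> \<epsilon> t = sat_exp_derivs \<eta> \<epsilon> (Suc k) t"
    by (simp add: sat_exp_derivs_def sat_exp_deriv_def power2_eq_square algebra_simps)
  ultimately show "(sat_exp_derivs \<eta> \<epsilon> k has_real_derivative sat_exp_derivs \<eta> \<epsilon> (Suc k) t) (at t)"
    unfolding sat_exp_derivs_def[of _ _ k] by simp
qed

lemma deriv_tower_sat_exp_prim_derivs: assumes "\<epsilon> > 0" "\<eta> > 0" shows "deriv_tower (sat_exp_prim_derivs \<eta> \<epsilon>)"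
  unfolding deriv_tower_def
proof (intro allI)
  fix k t show "(sat_exp_prim_derivs \<eta> \<epsilon> k has_real_derivative sat_exp_prim_derivs \<eta> \<epsilon> (Suc k) t) (at t)"
  proof (cases k)
    case 0 then show ?thesis using sat_exp_prim_has_real_derivative[OF assms] by (simp add: sat_exp_prim_derivs_def sat_exp_derivs_0)
  next
    case (Suc j) then show ?thesis using deriv_tower_sat_exp_derivs[OF assms(1)] by (simp add: sat_exp_prim_derivs_def deriv_tower_def)
  qed
qed

lemma smooth_fun_sat_exp: assumes "\<epsilon> > 0" "smooth_fun \<phi>" shows "smooth_fun (\<lambda>x. sat_exp \<eta> \<epsilon> (\<phi> x))"
  using smooth_fun_comp[OF deriv_tower_sat_exp_derivs[OF assms(1), of \<eta>] assms(2), where k=0] by (simp add: sat_exp_derivs_0)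

lemma smooth_fun_sat_exp_prim: assumes "\<epsilon> > 0" "\<eta> > 0" "smooth_fun \<phi>" shows "smooth_fun (\<lambda>x. sat_exp_prim \<eta> \<epsilon> (\<phi> x))"
  using smooth_fun_comp[OF deriv_tower_sat_exp_prim_derivs[OF assms(1,2)] assms(3), where k=0] by (simp add: sat_exp_prim_derivs_def)

context fixes \<eta> \<epsilon> :: real assumes ep: "\<epsilon> > 0" and et: "\<eta> > 0" begin

lemma sat_exp_pos: "sat_exp \<eta> \<epsilon> t > 0"
  unfolding sat_exp_def using ep by (simp add: add_pos_pos)

lemma sat_exp_less: "\<epsilon> * sat_exp \<eta> \<epsilon> t < 1"
  unfolding sat_exp_def using ep by (simp add: add_pos_pos field_simps)

lemma sat_exp_le: "sat_exp \<eta> \<epsilon> t \<le> 1/\<epsilon>"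
  using sat_exp_less[of t] ep by (simp add: field_simps)

lemma sat_exp_deriv_nonneg: "sat_exp_deriv \<eta> \<epsilon> t \<ge> 0"
proof -
  have "sat_exp_deriv \<eta> \<epsilon> t = \<eta> * sat_exp \<eta> \<epsilon> t * (1 - \<epsilon> * sat_exp \<eta> \<epsilon> t)"
    by (simp add: sat_exp_deriv_def power2_eq_square algebra_simps)
  then show ?thesis using sat_exp_pos[of t] sat_exp_less[of t] et by simp
qed

lemma sat_exp_deriv_le: "sat_exp_deriv \<eta> \<epsilon> t \<le> \<eta> * sat_exp \<eta> \<epsilon> t"
  unfolding sat_exp_deriv_def using ep et by simp

lemma abs_sat_exp_deriv_le: "\<bar>sat_exp_deriv \<eta> \<epsilon> t\<bar> \<le> \<eta> / \<epsilon>"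
proof -
  have "\<eta> * sat_exp \<eta> \<epsilon> t \<le> \<eta> * (1/\<epsilon>)" using sat_exp_le et by (intro mult_left_mono) auto
  then show ?thesis using sat_exp_deriv_nonneg[of t] sat_exp_deriv_le[of t] by simp
qed

lemma abs_sat_exp_le: "\<bar>sat_exp \<eta> \<epsilon> t\<bar> \<le> 1 / \<epsilon>"
  using sat_exp_pos[of t] sat_exp_le[of t] by simp

lemma sat_exp_prim_nonneg: "sat_exp_prim \<eta> \<epsilon> t \<ge> 0"
  unfolding sat_exp_prim_def using ep et by (intro divide_nonneg_pos) auto

lemma sat_exp_prim_le: "sat_exp_prim \<eta> \<epsilon> t \<le> exp (\<eta> * t) / \<eta>"
proof -
  have "ln (1 + \<epsilon> * exp (\<eta> * t)) \<le> \<epsilon> * exp (\<eta> * t)"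
    by (rule ln_add_one_self_le_self) (use ep in simp)
  then show ?thesis unfolding sat_exp_prim_def using ep et by (simp add: field_simps)
qed

lemma continuous_sat_exp: "continuous_on UNIV (sat_exp \<eta> \<epsilon>)"
  by (meson DERIV_isCont sat_exp_has_real_derivative continuous_at_imp_continuous_on ep)

lemma continuous_sat_exp_deriv: "continuous_on UNIV (sat_exp_deriv \<eta> \<epsilon>)"
  unfolding sat_exp_deriv_def[abs_def] by (intro continuous_intros continuous_sat_exp)

end

lemma sat_exp_ge_half:
  assumes "\<eta> > 0" "0 \<le> t" "t \<le> M"
  shows "sat_exp \<eta> (exp (-\<eta>*M)) t \<ge> exp (\<eta> * t) / 2"
proof -
  have "exp (-\<eta>*M) * exp (\<eta> * t) = exp (\<eta> * (t - M))" by (simp add: exp_add[symmetric] algebra_simps)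
  also have "\<dots> \<le> 1" using assms by (simp add: mult_nonneg_nonpos)
  finally have "1 + exp (-\<eta>*M) * exp (\<eta> * t) \<le> 2" by simp
  then show ?thesis unfolding sat_exp_def by (simp add: field_simps add_pos_pos)
qed

section \<open>Test functions\<close>

lemma dderiv_eq_0_outside:
  assumes "compact K" "\<And>x. x \<notin> K \<Longrightarrow> g x = 0" "x \<notin> K"
  shows "dderiv b g x = 0"
proof -
  have "((\<lambda>x. 0) has_derivative (\<lambda>h. 0)) (at x)" by simp
  then have "(g has_derivative (\<lambda>h. 0)) (at x)"
    by (rule has_derivative_transform_within_open[where s="- K"])
       (use assms compact_imp_closed in auto)
  then show ?thesis by (simp add: has_derivative_imp_dderiv)
qed

lemma bounded_compact_support:
  fixes f :: "'a::euclidean_space \<Rightarrow> 'b::real_normed_vector"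
  assumes "compact K" "continuous_on UNIV f" "\<And>x. x \<notin> K \<Longrightarrow> f x = 0"
  obtains L where "L \<ge> 0" "\<And>x. norm (f x) \<le> L"
proof -
  have "compact (f ` K)" by (rule compact_continuous_image) (use assms continuous_on_subset in blast)+
  then obtain L where L: "\<forall>y\<in>f ` K. norm y \<le> L" using compact_imp_bounded bounded_iff by metis
  have "norm (f x) \<le> max L 0" for x using L assms(3)[of x] by (cases "x \<in> K") auto
  then show ?thesis using that[of "max L 0"] by simp
qed

lemma integrable_lborel_compact_support:
  fixes g :: "'a::euclidean_space \<Rightarrow> real"
  assumes "continuous_on UNIV g" "compact K" "\<And>x. x \<notin> K \<Longrightarrow> g x = 0"
  shows "integrable lborel g"
proof -
  obtain B where B: "B \<ge> 0" "\<And>x. norm (g x) \<le> B" using bounded_compact_support[OF assms(2,1,3)] by blast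
  have "K \<in> sets lborel" using assms(2) compact_imp_closed borel_closed by (metis sets_lborel)
  moreover have "emeasure lborel K < \<infinity>" using assms(2) compact_imp_bounded emeasure_bounded_finite by blast
  ultimately have "integrable lborel (\<lambda>x. B * indicator K x)" by (intro integrable_mult_right) auto
  then show ?thesis
  proof (rule Bochner_Integration.integrable_bound)
    show "g \<in> borel_measurable lborel" using assms(1) by (simp add: borel_measurable_continuous_onI)
    show "AE x in lborel. norm (g x) \<le> norm (B * indicator K x)"
      using B assms(3) by (intro AE_I2) (auto simp: indicator_def)
  qed
qed

lemma integral_lborel_translate_diff:
  fixes g :: "'a::euclidean_space \<Rightarrow> real"
  assumes "integrable lborel g"
  shows "integral\<^sup>L lborel (\<lambda>x. g (x + c) - g x) = 0"
proof -
  have g: "g \<in> borel_measurable borel" using assms by simp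
  have "integrable (distr lborel borel ((+) c)) g" using assms by (simp add: lborel_distr_plus)
  then have "integrable lborel (\<lambda>x. g (c + x))"
    by (subst (asm) integrable_distr_eq) (use g in auto)
  moreover have "integral\<^sup>L lborel g = integral\<^sup>L lborel (\<lambda>x. g (c + x))"
    using integral_distr[of "(+) c" lborel borel g] g by (simp add: lborel_distr_plus)
  ultimately show ?thesis using assms by (simp add: add.commute)
qed

lemma ray_has_real_derivative:
  assumes "g differentiable (at (x + s *\<^sub>R b))"
  shows "((\<lambda>s. g (x + s *\<^sub>R b)) has_real_derivative dderiv b g (x + s *\<^sub>R b)) (at s)"
proof -
  let ?g' = "frechet_derivative g (at (x + s *\<^sub>R b))"
  have gd: "(g has_derivative ?g') (at (x + s *\<^sub>R b))" using assms frechet_derivative_works by blast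
  have "((\<lambda>s. x + s *\<^sub>R b) has_derivative (\<lambda>t. t *\<^sub>R b)) (at s)"
    by (auto intro!: derivative_eq_intros)
  from diff_chain_at[OF this gd]
  have "((\<lambda>s. g (x + s *\<^sub>R b)) has_derivative (\<lambda>t. ?g' (t *\<^sub>R b))) (at s)" by (simp add: o_def)
  moreover have "(\<lambda>t. ?g' (t *\<^sub>R b)) = (\<lambda>t. dderiv b g (x + s *\<^sub>R b) * t)"
    using linear_frechet_derivative[OF assms] by (auto simp: dderiv_def linear_scale)
  ultimately show ?thesis by (simp add: has_field_derivative_def)
qed

lemma abs_diff_le_of_deriv_bound:
  fixes F F' :: "real \<Rightarrow> real"
  assumes "\<And>t. (F has_real_derivative F' t) (at t)" "\<And>t. \<bar>F' t\<bar> \<le> L"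
  shows "\<bar>F a - F b\<bar> \<le> L * \<bar>a - b\<bar>"
proof -
  have *: "\<bar>F y - F x\<bar> \<le> L * \<bar>y - x\<bar>" if "x < y" for x y
  proof -
    have "\<exists>z>x. z < y \<and> F y - F x = (y - x) * F' z" by (rule MVT2[OF that]) (rule assms(1))
    then obtain z where "F y - F x = (y - x) * F' z" by blast
    then have "\<bar>F y - F x\<bar> = \<bar>y - x\<bar> * \<bar>F' z\<bar>" by (simp add: abs_mult)
    also have "\<dots> \<le> \<bar>y - x\<bar> * L" by (rule mult_left_mono[OF assms(2)]) simp
    finally show ?thesis by (simp add: mult.commute)
  qed
  show ?thesis
    using *[of a b] *[of b a] by (cases a b rule: linorder_cases) (auto simp: abs_minus_commute)
qed

lemma tendsto_difference_quotient:
  assumes "\<And>y. g differentiable (at y)"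
  shows "(\<lambda>n. (g (x + (1 / Suc n) *\<^sub>R b) - g x) / (1 / Suc n)) \<longlonglongrightarrow> dderiv b g x"
proof -
  have "((\<lambda>t. (g (x + t *\<^sub>R b) - g (x + 0 *\<^sub>R b)) / (t - 0)) \<longlongrightarrow> dderiv b g x) (at 0)"
    using ray_has_real_derivative[where x=x and s=0 and b=b, OF assms] unfolding has_field_derivative_iff by simp
  moreover have "filterlim (\<lambda>n. 1 / real (Suc n)) (at 0) sequentially"
  proof (subst filterlim_at, intro conjI)
    show "\<forall>\<^sub>F n in sequentially. 1 / real (Suc n) \<in> UNIV \<and> 1 / real (Suc n) \<noteq> 0" by simp
    show "(\<lambda>n. 1 / real (Suc n)) \<longlonglongrightarrow> 0"
      using LIMSEQ_inverse_real_of_nat by (simp add: inverse_eq_divide)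
  qed
  ultimately have "(\<lambda>n. (g (x + (1 / Suc n) *\<^sub>R b) - g (x + 0 *\<^sub>R b)) / (1 / Suc n - 0)) \<longlonglongrightarrow> dderiv b g x"
    by (rule filterlim_compose)
  then show ?thesis by simp
qed

lemma abs_difference_quotient_le:
  fixes g :: "'a::euclidean_space \<Rightarrow> real"
  assumes diff: "\<And>x. g differentiable (at x)" and L: "\<And>x. norm (dderiv b g x) \<le> L"
    and K: "\<And>x. x \<notin> K \<Longrightarrow> g x = 0" "\<And>x. x \<in> K \<Longrightarrow> norm x \<le> r" and b: "b \<in> Basis"
  shows "\<bar>(g (x + (1 / Suc n) *\<^sub>R b) - g x) / (1 / Suc n)\<bar> \<le> L * indicator (cball 0 (r + 1)) x"
proof (cases "x \<in> cball 0 (r + 1)")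
  case True
  have "\<bar>g (x + (1 / Suc n) *\<^sub>R b) - g (x + 0 *\<^sub>R b)\<bar> \<le> L * \<bar>1 / Suc n - 0\<bar>"
    by (rule abs_diff_le_of_deriv_bound[OF ray_has_real_derivative[OF diff]]) (use L in simp)
  then have "\<bar>g (x + (1 / Suc n) *\<^sub>R b) - g x\<bar> * Suc n \<le> L"
    by (simp add: pos_le_divide_eq[symmetric])
  then show ?thesis using True by (simp add: abs_mult)
next
  case False
  then have "norm x > r + 1" by simp
  moreover have "norm x \<le> norm (x + (1 / Suc n) *\<^sub>R b) + 1 / Suc n"
    using norm_triangle_ineq4[of "x + (1 / Suc n) *\<^sub>R b" "(1 / Suc n) *\<^sub>R b"] b by simp
  moreover have "1 / real (Suc n) \<le> 1" by simp
  ultimately have "norm x > r" "norm (x + (1 / Suc n) *\<^sub>R b) > r" by linarith+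
  then have "x \<notin> K" "x + (1 / Suc n) *\<^sub>R b \<notin> K" using K(2) by (meson not_le)+
  then show ?thesis using False by (simp add: K(1))
qed

text \<open>The integral is the limit of integrals of difference quotients, which vanish by translation
  invariance of Lebesgue measure.\<close>
lemma integral_lborel_dderiv_eq_0:
  fixes g :: "'a::euclidean_space \<Rightarrow> real"
  assumes diff: "\<And>x. g differentiable (at x)" and cont: "continuous_on UNIV (dderiv b g)"
    and K: "compact K" "\<And>x. x \<notin> K \<Longrightarrow> g x = 0" and b: "b \<in> Basis"
  shows "integral\<^sup>L lborel (dderiv b g) = 0"
proof -
  define q where "q n x = (g (x + (1 / Suc n) *\<^sub>R b) - g x) / (1 / Suc n)" for n x
  have gc: "continuous_on UNIV g"
    using diff by (meson continuous_at_imp_continuous_on differentiable_imp_continuous_within)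
  have "dderiv b g x = 0" if "x \<notin> K" for x using dderiv_eq_0_outside[OF K that] .
  then obtain L where L: "\<And>x. norm (dderiv b g x) \<le> L"
    using bounded_compact_support[OF K(1) cont] by blast
  obtain r where r: "\<And>x. x \<in> K \<Longrightarrow> norm x \<le> r"
    using compact_imp_bounded[OF K(1)] bounded_iff by metis
  have bound: "norm (q n x) \<le> L * indicator (cball 0 (r + 1)) x" for n x
    unfolding q_def real_norm_def by (rule abs_difference_quotient_le[OF diff L K(2) r b])
  have "(\<lambda>n. integral\<^sup>L lborel (q n)) \<longlonglongrightarrow> integral\<^sup>L lborel (dderiv b g)"
  proof (rule integral_dominated_convergence)
    show "dderiv b g \<in> borel_measurable lborel" using cont by (simp add: borel_measurable_continuous_onI)
    show "q n \<in> borel_measurable lborel" for n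
      unfolding q_def using borel_measurable_continuous_onI[OF gc] by measurable
    show "integrable lborel (\<lambda>x. L * indicator (cball 0 (r + 1)) x)"
      by (intro integrable_mult_right integrable_real_indicator emeasure_bounded_finite) auto
    show "AE x in lborel. (\<lambda>n. q n x) \<longlonglongrightarrow> dderiv b g x"
      unfolding q_def using tendsto_difference_quotient[OF diff] by simp
  qed (use bound in simp)
  moreover have "integral\<^sup>L lborel (q n) = 0" for n
  proof -
    have "integrable lborel g" by (rule integrable_lborel_compact_support[OF gc K])
    then show ?thesis
      unfolding q_def using integral_lborel_translate_diff by simp
  qed
  ultimately show ?thesis by (simp add: LIMSEQ_const_iff)
qed

lemma continuous_imp_borel_measurable_lebesgue:
  fixes f :: "'a::euclidean_space \<Rightarrow> 'b::euclidean_space"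
  shows "continuous_on UNIV f \<Longrightarrow> f \<in> borel_measurable lebesgue"
  by (rule measurable_completion) (simp add: borel_measurable_continuous_onI)

lemma continuous_dderiv: "smooth_fun f \<Longrightarrow> b \<in> Basis \<Longrightarrow> continuous_on UNIV (dderiv b f)"
  using smooth_fun_continuous smooth_fun_dderiv by blast

lemma continuous_cgrad: "smooth_fun f \<Longrightarrow> continuous_on UNIV (cgrad f)"
  unfolding cgrad_def[abs_def]
  by (intro continuous_on_sum continuous_on_scaleR continuous_dderiv continuous_on_const) auto

lemma cgrad_eq_0_outside: "compact K \<Longrightarrow> (\<And>x. x \<notin> K \<Longrightarrow> f x = 0) \<Longrightarrow> x \<notin> K \<Longrightarrow> cgrad f x = 0"
  unfolding cgrad_def using dderiv_eq_0_outside[of K f x] by simp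

lemma cgrad_inner_Basis: "b \<in> Basis \<Longrightarrow> cgrad f x \<bullet> b = dderiv b f x"
  unfolding cgrad_def by (simp add: inner_sum_left inner_Basis if_distrib sum.delta cong: if_cong)

lemma cgrad_eqI: "(\<And>b. b \<in> Basis \<Longrightarrow> v \<bullet> b = dderiv b f x) \<Longrightarrow> cgrad f x = v"
  by (metis cgrad_inner_Basis euclidean_eqI)

lemma inner_cgrad: "v \<bullet> cgrad f x = (\<Sum>b\<in>Basis. dderiv b f x * (v \<bullet> b))"
  by (subst euclidean_inner) (simp add: cgrad_inner_Basis mult.commute)

lemma cgrad_comp_mult:
  assumes "smooth_fun \<phi>" "smooth_fun \<psi>" "\<And>t. (F has_real_derivative F' t) (at t)"
  shows "cgrad (\<lambda>x. F (\<phi> x) * \<psi> x) x = (F' (\<phi> x) * \<psi> x) *\<^sub>R cgrad \<phi> x + F (\<phi> x) *\<^sub>R cgrad \<psi> x"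
proof (rule cgrad_eqI)
  fix b :: 'a assume b: "b \<in> Basis"
  have "((\<lambda>x. F (\<phi> x)) has_derivative (\<lambda>h. frechet_derivative \<phi> (at x) h * F' (\<phi> x))) (at x)"
    by (rule DERIV_compose_FDERIV[OF assms(3)])
       (use assms(1) smooth_fun_differentiable frechet_derivative_works in blast)
  moreover have "(\<psi> has_derivative frechet_derivative \<psi> (at x)) (at x)"
    using assms(2) smooth_fun_differentiable frechet_derivative_works by blast
  ultimately have "((\<lambda>x. F (\<phi> x) * \<psi> x) has_derivative (\<lambda>h. F (\<phi> x) * frechet_derivative \<psi> (at x) h
      + frechet_derivative \<phi> (at x) h * F' (\<phi> x) * \<psi> x)) (at x)"
    using has_derivative_mult by fastforce
  then have "dderiv b (\<lambda>x. F (\<phi> x) * \<psi> x) x = F (\<phi> x) * dderiv b \<psi> x + dderiv b \<phi> x * F' (\<phi> x) * \<psi> x"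
    unfolding dderiv_def by (simp add: has_derivative_imp_dderiv[unfolded dderiv_def])
  then show "((F' (\<phi> x) * \<psi> x) *\<^sub>R cgrad \<phi> x + F (\<phi> x) *\<^sub>R cgrad \<psi> x) \<bullet> b = dderiv b (\<lambda>x. F (\<phi> x) * \<psi> x) x"
    using b by (simp add: inner_add_left cgrad_inner_Basis algebra_simps)
qed

locale test_function =
  fixes \<Omega> :: "'a::euclidean_space set" and f :: "'a \<Rightarrow> real"
  assumes test_fun: "test_fun \<Omega> f"
begin

definition supp where "supp = (SOME K. compact K \<and> K \<subseteq> \<Omega> \<and> (\<forall>x. x \<notin> K \<longrightarrow> f x = 0))"

lemma supp: "compact supp" "supp \<subseteq> \<Omega>" "\<And>x. x \<notin> supp \<Longrightarrow> f x = 0"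
proof -
  have "\<exists>K. compact K \<and> K \<subseteq> \<Omega> \<and> (\<forall>x. x \<notin> K \<longrightarrow> f x = 0)" using test_fun unfolding test_fun_def by blast
  from someI_ex[OF this] show "compact supp" "supp \<subseteq> \<Omega>" "\<And>x. x \<notin> supp \<Longrightarrow> f x = 0"
    unfolding supp_def by auto
qed

lemma smooth: "smooth_fun f" using test_fun unfolding test_fun_def by blast

lemma continuous: "continuous_on UNIV f" using smooth smooth_fun_continuous by blast

lemma differentiable: "f differentiable (at x)" using smooth smooth_fun_differentiable by blast

lemma continuous_cgrad: "continuous_on UNIV (cgrad f)" using smooth continuous_cgrad by blast

lemma cgrad_outside: "x \<notin> supp \<Longrightarrow> cgrad f x = 0" using cgrad_eq_0_outside supp by blast

lemma dderiv_outside: "x \<notin> supp \<Longrightarrow> dderiv b f x = 0" using dderiv_eq_0_outside supp by blast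

lemma bounded: obtains P where "\<And>x. \<bar>f x\<bar> \<le> P"
  using bounded_compact_support[OF supp(1) continuous supp(3)] by auto

lemma bounded_cgrad: obtains Q where "\<And>x. norm (cgrad f x) \<le> Q"
  using bounded_compact_support[OF supp(1) continuous_cgrad cgrad_outside] by auto

lemma borel_measurable: "f \<in> borel_measurable (lebesgue_on S)"
  using continuous_imp_borel_measurable_lebesgue[OF continuous] by (rule measurable_restrict_space1)

lemma borel_measurable_cgrad: "cgrad f \<in> borel_measurable (lebesgue_on S)"
  using continuous_imp_borel_measurable_lebesgue[OF continuous_cgrad] by (rule measurable_restrict_space1)

lemma integral_cgrad_eq_0:
  assumes "\<Omega> \<in> sets lebesgue" "b \<in> Basis"
  shows "integral\<^sup>L (lebesgue_on \<Omega>) (\<lambda>x. cgrad f x \<bullet> b) = 0"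
proof -
  have "indicator \<Omega> x *\<^sub>R (cgrad f x \<bullet> b) = dderiv b f x" for x
    using supp(2) dderiv_outside[of x b] by (cases "x \<in> \<Omega>") (auto simp: cgrad_inner_Basis assms(2))
  moreover have "dderiv b f \<in> borel_measurable lborel"
    using continuous_dderiv[OF smooth assms(2)] borel_measurable_continuous_onI by simp
  moreover have "integral\<^sup>L lborel (dderiv b f) = 0"
    by (rule integral_lborel_dderiv_eq_0[OF differentiable continuous_dderiv[OF smooth assms(2)] supp(1,3) assms(2)])
  ultimately show ?thesis using assms(1) by (simp add: integral_restrict_space integral_completion)
qed

end

lemma test_fun_dderiv:
  assumes "test_fun \<Omega> f" "b \<in> Basis"
  shows "test_fun \<Omega> (dderiv b f)"
proof -
  interpret test_function \<Omega> f by (rule test_function.intro) fact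
  show ?thesis unfolding test_fun_def using smooth_fun_dderiv[OF smooth assms(2)] supp dderiv_outside by blast
qed

lemma test_fun_mult:
  assumes "test_fun \<Omega> f" "smooth_fun g"
  shows "test_fun \<Omega> (\<lambda>x. g x * f x)"
proof -
  interpret test_function \<Omega> f by (rule test_function.intro) fact
  show ?thesis unfolding test_fun_def using smooth_fun_mult[OF assms(2) smooth] supp by auto
qed

section \<open>The space \<open>H\<^sup>1\<^sub>0\<close> on a domain of finite measure\<close>

lemma power2_norm_add_le:
  fixes a b :: "'a::real_normed_vector"
  shows "(norm (a + b))\<^sup>2 \<le> 2 * (norm a)\<^sup>2 + 2 * (norm b)\<^sup>2"
proof -
  have "(norm (a + b))\<^sup>2 \<le> (norm a + norm b)\<^sup>2" by (simp add: norm_triangle_ineq power_mono)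
  also have "\<dots> \<le> 2 * (norm a)\<^sup>2 + 2 * (norm b)\<^sup>2"
    using zero_le_power2[of "norm a - norm b"] by (simp add: power2_eq_square algebra_simps)
  finally show ?thesis .
qed

lemma power2_norm_add3_le:
  fixes a b c :: "'a::real_normed_vector"
  shows "(norm (a + b + c))\<^sup>2 \<le> 3 * ((norm a)\<^sup>2 + (norm b)\<^sup>2 + (norm c)\<^sup>2)"
proof -
  have "(norm (a + b + c))\<^sup>2 \<le> (norm a + norm b + norm c)\<^sup>2"
    by (intro power_mono) (auto intro: order_trans[OF norm_triangle_ineq] add_right_mono)
  also have "\<dots> \<le> 3 * ((norm a)\<^sup>2 + (norm b)\<^sup>2 + (norm c)\<^sup>2)"
    using zero_le_power2[of "norm a - norm b"] zero_le_power2[of "norm b - norm c"] zero_le_power2[of "norm a - norm c"]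
    by (simp add: power2_eq_square algebra_simps)
  finally show ?thesis .
qed

lemma power2_le_power2_of_abs_le: "\<bar>p\<bar> \<le> q \<Longrightarrow> p\<^sup>2 \<le> (q::real)\<^sup>2"
  by (metis abs_ge_zero abs_le_square_iff abs_of_nonneg order_trans)

lemma integrable_mult_bounded:
  fixes f g :: "'a \<Rightarrow> real"
  assumes "integrable M f" "g \<in> borel_measurable M" "AE x in M. \<bar>g x\<bar> \<le> B"
  shows "integrable M (\<lambda>x. f x * g x)"
proof (rule Bochner_Integration.integrable_bound)
  show "integrable M (\<lambda>x. \<bar>B\<bar> * \<bar>f x\<bar>)" using assms(1) by auto
  show "AE x in M. norm (f x * g x) \<le> norm (\<bar>B\<bar> * \<bar>f x\<bar>)"
    using assms(3)
  proof eventually_elim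
    case (elim x)
    then show ?case using mult_left_mono[OF elim abs_ge_zero[of "f x"]] by (simp add: abs_mult mult.commute)
  qed
qed (intro borel_measurable_times borel_measurable_integrable assms(1,2))

lemma tendsto_integral_power2_comp_diff:
  fixes f :: "nat \<Rightarrow> 'a \<Rightarrow> real" and g :: "real \<Rightarrow> real"
  assumes [measurable]: "\<And>n. f n \<in> borel_measurable M" "f0 \<in> borel_measurable M" "w \<in> borel_measurable M"
    and lim: "AE x in M. (\<lambda>n. f n x) \<longlonglongrightarrow> f0 x"
    and g: "continuous_on UNIV g" "\<And>t. \<bar>g t\<bar> \<le> L"
    and w: "integrable M w" "\<And>x. w x \<ge> 0"
  shows "\<And>n. integrable M (\<lambda>x. (g (f n x) - g (f0 x))\<^sup>2 * w x)"
    and "(\<lambda>n. \<integral>x. (g (f n x) - g (f0 x))\<^sup>2 * w x \<partial>M) \<longlonglongrightarrow> 0"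
proof -
  have [measurable]: "g \<in> borel_measurable borel" using g(1) by (rule borel_measurable_continuous_onI)
  have bound: "AE x in M. norm ((g (f n x) - g (f0 x))\<^sup>2 * w x) \<le> (2 * L)\<^sup>2 * w x" for n
  proof (rule AE_I2)
    fix x
    have "\<bar>g (f n x) - g (f0 x)\<bar> \<le> 2 * L" using g(2)[of "f n x"] g(2)[of "f0 x"] by linarith
    then have "(g (f n x) - g (f0 x))\<^sup>2 * w x \<le> (2 * L)\<^sup>2 * w x"
      by (intro mult_right_mono power2_le_power2_of_abs_le w(2))
    then show "norm ((g (f n x) - g (f0 x))\<^sup>2 * w x) \<le> (2 * L)\<^sup>2 * w x" using w(2)[of x] by simp
  qed
  have "AE x in M. (\<lambda>n. (g (f n x) - g (f0 x))\<^sup>2 * w x) \<longlonglongrightarrow> (g (f0 x) - g (f0 x))\<^sup>2 * w x"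
    using lim
  proof eventually_elim
    case (elim x)
    have "isCont g (f0 x)" using g(1) by (simp add: continuous_on_eq_continuous_at)
    then have "(\<lambda>n. g (f n x)) \<longlonglongrightarrow> g (f0 x)" using elim by (rule isCont_tendsto_compose)
    then show ?case by (intro tendsto_intros)
  qed
  then have "AE x in M. (\<lambda>n. (g (f n x) - g (f0 x))\<^sup>2 * w x) \<longlonglongrightarrow> 0" by simp
  note dominated = integrable_dominated_convergence2[OF _ _ _ this bound]
    integral_dominated_convergence[OF _ _ _ this bound]
  show "integrable M (\<lambda>x. (g (f n x) - g (f0 x))\<^sup>2 * w x)" for n
    by (rule dominated) (use w in auto)
  show "(\<lambda>n. \<integral>x. (g (f n x) - g (f0 x))\<^sup>2 * w x \<partial>M) \<longlonglongrightarrow> 0"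
    using dominated(2) w by simp
qed

lemma (in finite_measure) tendsto_integral_abs_of_power2_le:
  fixes f S :: "nat \<Rightarrow> 'a \<Rightarrow> real"
  assumes [measurable]: "\<And>k. f k \<in> borel_measurable M"
    and S: "\<And>k. integrable M (S k)" "\<And>k x. (f k x)\<^sup>2 \<le> S k x" "(\<lambda>k. \<integral>x. S k x \<partial>M) \<longlonglongrightarrow> 0"
  shows "(\<lambda>k. \<integral>x. \<bar>f k x\<bar> \<partial>M) \<longlonglongrightarrow> 0"
proof (rule LIMSEQ_I)
  fix r :: real assume "r > 0"
  define m where "m = measure M (space M)"
  define e where "e = r / (2 * (m + 1))"
  have "m \<ge> 0" by (simp add: m_def)
  then have e: "e > 0" "e * m < r / 2"
    using \<open>r > 0\<close> by (simp_all add: e_def field_simps)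
  have abs_le: "\<bar>f k x\<bar> \<le> e + S k x / e" for k x
  proof -
    have "2 * (e * \<bar>f k x\<bar>) \<le> e * e + (f k x)\<^sup>2"
      using zero_le_power2[of "\<bar>f k x\<bar> - e"] by (simp add: power2_eq_square algebra_simps abs_mult_self_eq)
    moreover have "0 \<le> e * \<bar>f k x\<bar>" using e(1) by simp
    ultimately have "\<bar>f k x\<bar> * e \<le> e * e + S k x" using S(2)[of k x] by (simp add: mult.commute)
    then have "\<bar>f k x\<bar> \<le> (e * e + S k x) / e" using e(1) by (simp add: pos_le_divide_eq)
    also have "\<dots> = e + S k x / e" using e(1) by (simp add: add_divide_distrib)
    finally show ?thesis .
  qed
  obtain k0 where k0: "\<And>k. k \<ge> k0 \<Longrightarrow> \<bar>\<integral>x. S k x \<partial>M\<bar> < e * (r / 2)"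
    using LIMSEQ_D[OF S(3), of "e * (r / 2)"] e(1) \<open>r > 0\<close> by auto
  have "norm ((\<integral>x. \<bar>f k x\<bar> \<partial>M) - 0) < r" if "k \<ge> k0" for k
  proof -
    have bound: "integrable M (\<lambda>x. e + S k x / e)" using S(1) by auto
    moreover from bound have "integrable M (\<lambda>x. \<bar>f k x\<bar>)"
      by (rule Bochner_Integration.integrable_bound) (use abs_le in \<open>auto intro!: AE_I2 order_trans[OF _ abs_ge_self]\<close>)
    ultimately have "(\<integral>x. \<bar>f k x\<bar> \<partial>M) \<le> (\<integral>x. e + S k x / e \<partial>M)"
      using abs_le by (intro integral_mono) auto
    also have "\<dots> = e * m + (\<integral>x. S k x \<partial>M) / e"
      using S(1) by (simp add: m_def)
    also have "\<dots> < r / 2 + r / 2"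
    proof -
      have "(\<integral>x. S k x \<partial>M) < e * (r / 2)" using k0[OF that] by linarith
      then have "(\<integral>x. S k x \<partial>M) / e < r / 2" using e(1) by (simp add: divide_less_eq mult.commute)
      then show ?thesis using e(2) by linarith
    qed
    finally show ?thesis by simp
  qed
  then show "\<exists>k0. \<forall>k\<ge>k0. norm ((\<integral>x. \<bar>f k x\<bar> \<partial>M) - 0) < r" by blast
qed

definition H1_sqdist :: "('a::euclidean_space \<Rightarrow> real) \<Rightarrow> ('a \<Rightarrow> real) \<Rightarrow> ('a \<Rightarrow> 'a) \<Rightarrow> 'a \<Rightarrow> real" where
  "H1_sqdist \<phi> u G x = (\<phi> x - u x)\<^sup>2 + (norm (cgrad \<phi> x - G x))\<^sup>2"

lemma H1_sqdist_nonneg: "H1_sqdist \<phi> u G x \<ge> 0"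
  by (simp add: H1_sqdist_def)

text \<open>The pointwise error in the chain rule for \<open>F(u) \<psi>\<close> when \<open>u\<close> is replaced by an approximation \<open>a\<close> of \<open>b = u x\<close>.\<close>
lemma chain_rule_error_le:
  fixes g g' q :: "'a::real_normed_vector"
  assumes F: "\<bar>F a - F b\<bar> \<le> L * \<bar>a - b\<bar>" and F': "\<bar>F' a\<bar> \<le> L"
    and p: "\<bar>p\<bar> \<le> P" and q: "norm q \<le> Q"
  shows "(F a * p - F b * p)\<^sup>2 + (norm ((F' a * p) *\<^sub>R g' + F a *\<^sub>R q - ((F' b * p) *\<^sub>R g + F b *\<^sub>R q)))\<^sup>2
    \<le> (4 * L\<^sup>2 * P\<^sup>2 + 3 * L\<^sup>2 * Q\<^sup>2) * ((a - b)\<^sup>2 + (norm (g' - g))\<^sup>2) + 3 * P\<^sup>2 * ((F' a - F' b)\<^sup>2 * (norm g)\<^sup>2)"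
proof -
  define A B D N where "A = (a - b)\<^sup>2" "B = (norm (g' - g))\<^sup>2" "D = (F' a - F' b)\<^sup>2" "N = (norm g)\<^sup>2"
  have nonneg: "A \<ge> 0" "B \<ge> 0" "D \<ge> 0" "N \<ge> 0" by (simp_all add: A_B_D_N_def)
  have FA: "(F a - F b)\<^sup>2 \<le> L\<^sup>2 * A"
    using power2_le_power2_of_abs_le[OF F] by (simp add: A_B_D_N_def power_mult_distrib)
  have P2: "p\<^sup>2 \<le> P\<^sup>2" and Q2: "(norm q)\<^sup>2 \<le> Q\<^sup>2" and L2: "(F' a)\<^sup>2 \<le> L\<^sup>2"
    using p q F' by (auto intro: power2_le_power2_of_abs_le)
  have "(F' a * p) *\<^sub>R g' + F a *\<^sub>R q - ((F' b * p) *\<^sub>R g + F b *\<^sub>R q) =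
      (F' a * p) *\<^sub>R (g' - g) + ((F' a - F' b) * p) *\<^sub>R g + (F a - F b) *\<^sub>R q"
    by (simp add: algebra_simps)
  then have "(norm ((F' a * p) *\<^sub>R g' + F a *\<^sub>R q - ((F' b * p) *\<^sub>R g + F b *\<^sub>R q)))\<^sup>2
      \<le> 3 * ((F' a)\<^sup>2 * p\<^sup>2 * B + D * p\<^sup>2 * N + (F a - F b)\<^sup>2 * (norm q)\<^sup>2)"
    using power2_norm_add3_le[of "(F' a * p) *\<^sub>R (g' - g)" "((F' a - F' b) * p) *\<^sub>R g" "(F a - F b) *\<^sub>R q"]
    by (simp add: A_B_D_N_def power_mult_distrib)
  moreover have "(F' a)\<^sup>2 * p\<^sup>2 * B \<le> L\<^sup>2 * P\<^sup>2 * B"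
    by (intro mult_right_mono mult_mono L2 P2 nonneg) auto
  moreover have "D * p\<^sup>2 * N \<le> D * P\<^sup>2 * N"
    by (intro mult_right_mono mult_left_mono P2 nonneg)
  moreover have "(F a - F b)\<^sup>2 * (norm q)\<^sup>2 \<le> L\<^sup>2 * A * Q\<^sup>2"
    by (intro mult_mono FA Q2) (use nonneg in auto)
  moreover have "(F a * p - F b * p)\<^sup>2 \<le> L\<^sup>2 * A * P\<^sup>2"
    using mult_mono[OF FA P2] nonneg by (simp add: power_mult_distrib[symmetric] left_diff_distrib)
  moreover have "0 \<le> L\<^sup>2 * P\<^sup>2 * A" "0 \<le> L\<^sup>2 * (P\<^sup>2 + 3 * Q\<^sup>2) * B" "0 \<le> L\<^sup>2 * Q\<^sup>2 * A"
    using nonneg by simp_all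
  ultimately show ?thesis unfolding A_B_D_N_def[symmetric] by (simp add: algebra_simps)
qed

locale finite_domain =
  fixes \<Omega> :: "'a::euclidean_space set"
  assumes sets_domain [measurable]: "\<Omega> \<in> sets lebesgue"
    and emeasure_domain: "emeasure lebesgue \<Omega> < \<infinity>"
begin

sublocale M: finite_measure "lebesgue_on \<Omega>"
  using emeasure_domain by (intro finite_measureI) (simp add: emeasure_restrict_space)

lemma set_integrable_iff:
  fixes f :: "'a \<Rightarrow> 'b::{banach, second_countable_topology}"
  shows "set_integrable lebesgue \<Omega> f \<longleftrightarrow> integrable (lebesgue_on \<Omega>) f"
  by (simp add: set_integrable_def integrable_restrict_space)

lemma set_integral_eq:
  fixes f :: "'a \<Rightarrow> 'b::{banach, second_countable_topology}"
  shows "set_lebesgue_integral lebesgue \<Omega> f = integral\<^sup>L (lebesgue_on \<Omega>) f"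
  by (simp add: set_lebesgue_integral_def integral_restrict_space)

lemma set_borel_measurable_iff:
  fixes f :: "'a \<Rightarrow> 'b::real_normed_vector"
  shows "set_borel_measurable lebesgue \<Omega> f \<longleftrightarrow> f \<in> borel_measurable (lebesgue_on \<Omega>)"
  by (simp add: set_borel_measurable_def borel_measurable_restrict_space_iff)

lemma AE_iff: "(AE x in lebesgue_on \<Omega>. P x) \<longleftrightarrow> (AE x in lebesgue. x \<in> \<Omega> \<longrightarrow> P x)"
  by (simp add: AE_restrict_space_iff)

lemma H10_iff:
  "H10 \<Omega> u G \<longleftrightarrow> u \<in> borel_measurable (lebesgue_on \<Omega>) \<and> integrable (lebesgue_on \<Omega>) (\<lambda>x. (u x)\<^sup>2) \<and>
     G \<in> borel_measurable (lebesgue_on \<Omega>) \<and> integrable (lebesgue_on \<Omega>) (\<lambda>x. (norm (G x))\<^sup>2) \<and>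
     (\<exists>\<phi>. (\<forall>k. test_fun \<Omega> (\<phi> k)) \<and> (\<lambda>k. \<integral>x. H1_sqdist (\<phi> k) u G x \<partial>lebesgue_on \<Omega>) \<longlonglongrightarrow> 0)"
  unfolding H10_def H1_sqdist_def set_integrable_iff set_integral_eq set_borel_measurable_iff ..

lemma Linf_on_iff:
  "Linf_on \<Omega> f \<longleftrightarrow> f \<in> borel_measurable (lebesgue_on \<Omega>) \<and> (\<exists>B. AE x in lebesgue_on \<Omega>. \<bar>f x\<bar> \<le> B)"
  unfolding Linf_on_def set_borel_measurable_iff AE_iff ..

lemma integrable_test_fun:
  assumes "test_fun \<Omega> \<phi>"
  shows "integrable (lebesgue_on \<Omega>) (\<lambda>x. (\<phi> x)\<^sup>2)" "integrable (lebesgue_on \<Omega>) (\<lambda>x. (norm (cgrad \<phi> x))\<^sup>2)"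
proof -
  interpret test_function \<Omega> \<phi> by (rule test_function.intro) fact
  obtain P Q where P: "\<And>x. \<bar>\<phi> x\<bar> \<le> P" and Q: "\<And>x. norm (cgrad \<phi> x) \<le> Q"
    using bounded bounded_cgrad by metis
  show "integrable (lebesgue_on \<Omega>) (\<lambda>x. (\<phi> x)\<^sup>2)"
    using borel_measurable P by (intro M.integrable_const_bound[where B="P\<^sup>2"]) (auto intro: power2_le_power2_of_abs_le)
  show "integrable (lebesgue_on \<Omega>) (\<lambda>x. (norm (cgrad \<phi> x))\<^sup>2)"
    using borel_measurable_cgrad Q
    by (intro M.integrable_const_bound[where B="Q\<^sup>2"] AE_I2) (auto intro: power2_le_power2_of_abs_le)
qed


lemma integrable_H1_sqdist:
  assumes "test_fun \<Omega> \<phi>" "u \<in> borel_measurable (lebesgue_on \<Omega>)" "integrable (lebesgue_on \<Omega>) (\<lambda>x. (u x)\<^sup>2)"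
    "G \<in> borel_measurable (lebesgue_on \<Omega>)" "integrable (lebesgue_on \<Omega>) (\<lambda>x. (norm (G x))\<^sup>2)"
  shows "integrable (lebesgue_on \<Omega>) (H1_sqdist \<phi> u G)"
proof (rule Bochner_Integration.integrable_bound)
  interpret test_function \<Omega> \<phi> by (rule test_function.intro) fact
  show "integrable (lebesgue_on \<Omega>)
      (\<lambda>x. 2 * (\<phi> x)\<^sup>2 + 2 * (u x)\<^sup>2 + (2 * (norm (cgrad \<phi> x))\<^sup>2 + 2 * (norm (G x))\<^sup>2))"
    using integrable_test_fun[OF assms(1)] assms(3,5) by auto
  show "H1_sqdist \<phi> u G \<in> borel_measurable (lebesgue_on \<Omega>)"
    unfolding H1_sqdist_def[abs_def] using borel_measurable borel_measurable_cgrad assms(2,4) by measurable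
  show "AE x in lebesgue_on \<Omega>. norm (H1_sqdist \<phi> u G x) \<le>
      norm (2 * (\<phi> x)\<^sup>2 + 2 * (u x)\<^sup>2 + (2 * (norm (cgrad \<phi> x))\<^sup>2 + 2 * (norm (G x))\<^sup>2))"
  proof (rule AE_I2)
    fix x
    have "(\<phi> x - u x)\<^sup>2 \<le> 2 * (\<phi> x)\<^sup>2 + 2 * (u x)\<^sup>2" using power2_norm_add_le[of "\<phi> x" "- u x"] by simp
    moreover have "(norm (cgrad \<phi> x - G x))\<^sup>2 \<le> 2 * (norm (cgrad \<phi> x))\<^sup>2 + 2 * (norm (G x))\<^sup>2"
      using power2_norm_add_le[of "cgrad \<phi> x" "- G x"] by simp
    ultimately show "norm (H1_sqdist \<phi> u G x) \<le>
        norm (2 * (\<phi> x)\<^sup>2 + 2 * (u x)\<^sup>2 + (2 * (norm (cgrad \<phi> x))\<^sup>2 + 2 * (norm (G x))\<^sup>2))"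
      by (simp add: H1_sqdist_def)
  qed
qed

text \<open>The defining sequence, thinned out to converge almost everywhere.\<close>
lemma H10_approximation:
  assumes "H10 \<Omega> u G"
  obtains \<phi> where "\<And>k. test_fun \<Omega> (\<phi> k)" "\<And>k. integrable (lebesgue_on \<Omega>) (H1_sqdist (\<phi> k) u G)"
    "(\<lambda>k. \<integral>x. H1_sqdist (\<phi> k) u G x \<partial>lebesgue_on \<Omega>) \<longlonglongrightarrow> 0"
    "AE x in lebesgue_on \<Omega>. (\<lambda>k. \<phi> k x) \<longlonglongrightarrow> u x"
proof -
  obtain \<phi> where \<phi>: "\<And>k. test_fun \<Omega> (\<phi> k)" and lim: "(\<lambda>k. \<integral>x. H1_sqdist (\<phi> k) u G x \<partial>lebesgue_on \<Omega>) \<longlonglongrightarrow> 0"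
    using assms unfolding H10_iff by blast
  have integrable: "integrable (lebesgue_on \<Omega>) (H1_sqdist (\<phi> k) u G)" for k
    using assms unfolding H10_iff by (intro integrable_H1_sqdist \<phi>) auto
  have "(\<lambda>k. \<integral>x. norm (H1_sqdist (\<phi> k) u G x) \<partial>lebesgue_on \<Omega>) \<longlonglongrightarrow> 0"
    using lim by (simp add: H1_sqdist_nonneg)
  then obtain r where r: "strict_mono r" "AE x in lebesgue_on \<Omega>. (\<lambda>k. H1_sqdist (\<phi> (r k)) u G x) \<longlonglongrightarrow> 0"
    using tendsto_L1_AE_subseq[where u="\<lambda>k. H1_sqdist (\<phi> k) u G"] integrable by blast
  show thesis
  proof
    show "test_fun \<Omega> (\<phi> (r k))" "integrable (lebesgue_on \<Omega>) (H1_sqdist (\<phi> (r k)) u G)" for k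
      by (fact \<phi> integrable)+
    show "(\<lambda>k. \<integral>x. H1_sqdist (\<phi> (r k)) u G x \<partial>lebesgue_on \<Omega>) \<longlonglongrightarrow> 0"
      using LIMSEQ_subseq_LIMSEQ[OF lim r(1)] by (simp add: o_def)
    show "AE x in lebesgue_on \<Omega>. (\<lambda>k. \<phi> (r k) x) \<longlonglongrightarrow> u x"
      using r(2)
    proof eventually_elim
      case (elim x)
      have "(\<lambda>k. (\<phi> (r k) x - u x)\<^sup>2) \<longlonglongrightarrow> 0"
        by (rule tendsto_sandwich[OF _ _ tendsto_const elim]) (auto simp: H1_sqdist_def)
      then have "(\<lambda>k. \<bar>\<phi> (r k) x - u x\<bar>) \<longlonglongrightarrow> 0"
        using tendsto_real_sqrt by fastforce
      then show ?case by (simp add: LIM_zero_iff tendsto_rabs_zero_iff)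
    qed
  qed
qed

lemma integrable_power2_of_H1_sqdist:
  assumes [measurable]: "v \<in> borel_measurable (lebesgue_on \<Omega>)" "Gv \<in> borel_measurable (lebesgue_on \<Omega>)"
    and \<phi>: "test_fun \<Omega> \<phi>" and integrable: "integrable (lebesgue_on \<Omega>) (H1_sqdist \<phi> v Gv)"
  shows "integrable (lebesgue_on \<Omega>) (\<lambda>x. (v x)\<^sup>2)" "integrable (lebesgue_on \<Omega>) (\<lambda>x. (norm (Gv x))\<^sup>2)"
proof -
  have [measurable]: "\<phi> \<in> borel_measurable (lebesgue_on \<Omega>)" "cgrad \<phi> \<in> borel_measurable (lebesgue_on \<Omega>)"
    using test_function.borel_measurable test_function.borel_measurable_cgrad test_function.intro[OF \<phi>] by blast+
  have "integrable (lebesgue_on \<Omega>) (\<lambda>x. 2 * H1_sqdist \<phi> v Gv x + 2 * (\<phi> x)\<^sup>2)"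
    using integrable integrable_test_fun[OF \<phi>] by auto
  then show "integrable (lebesgue_on \<Omega>) (\<lambda>x. (v x)\<^sup>2)"
  proof (rule Bochner_Integration.integrable_bound)
    show "AE x in lebesgue_on \<Omega>. norm ((v x)\<^sup>2) \<le> norm (2 * H1_sqdist \<phi> v Gv x + 2 * (\<phi> x)\<^sup>2)"
    proof (rule AE_I2)
      fix x
      have "(v x)\<^sup>2 \<le> 2 * (\<phi> x - v x)\<^sup>2 + 2 * (\<phi> x)\<^sup>2"
        using power2_norm_add_le[of "v x - \<phi> x" "\<phi> x"] by (simp add: power2_commute)
      then show "norm ((v x)\<^sup>2) \<le> norm (2 * H1_sqdist \<phi> v Gv x + 2 * (\<phi> x)\<^sup>2)"
        unfolding H1_sqdist_def by simp (smt (verit) zero_le_power2)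
    qed
  qed measurable
  have "integrable (lebesgue_on \<Omega>) (\<lambda>x. 2 * H1_sqdist \<phi> v Gv x + 2 * (norm (cgrad \<phi> x))\<^sup>2)"
    using integrable integrable_test_fun[OF \<phi>] by auto
  then show "integrable (lebesgue_on \<Omega>) (\<lambda>x. (norm (Gv x))\<^sup>2)"
  proof (rule Bochner_Integration.integrable_bound)
    show "AE x in lebesgue_on \<Omega>. norm ((norm (Gv x))\<^sup>2) \<le> norm (2 * H1_sqdist \<phi> v Gv x + 2 * (norm (cgrad \<phi> x))\<^sup>2)"
    proof (rule AE_I2)
      fix x
      have "(norm (Gv x))\<^sup>2 \<le> 2 * (norm (cgrad \<phi> x - Gv x))\<^sup>2 + 2 * (norm (cgrad \<phi> x))\<^sup>2"
        using power2_norm_add_le[of "Gv x - cgrad \<phi> x" "cgrad \<phi> x"] by (simp add: norm_minus_commute)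
      then show "norm ((norm (Gv x))\<^sup>2) \<le> norm (2 * H1_sqdist \<phi> v Gv x + 2 * (norm (cgrad \<phi> x))\<^sup>2)"
        unfolding H1_sqdist_def by simp (smt (verit) zero_le_power2)
    qed
  qed measurable
qed

lemma H10I:
  assumes [measurable]: "v \<in> borel_measurable (lebesgue_on \<Omega>)" "Gv \<in> borel_measurable (lebesgue_on \<Omega>)"
    and \<phi>: "\<And>n. test_fun \<Omega> (\<phi> n)"
    and bound: "\<And>n. AE x in lebesgue_on \<Omega>. H1_sqdist (\<phi> n) v Gv x \<le> B n x"
    and B: "\<And>n. integrable (lebesgue_on \<Omega>) (B n)" "(\<lambda>n. \<integral>x. B n x \<partial>lebesgue_on \<Omega>) \<longlonglongrightarrow> 0"
  shows "H10 \<Omega> v Gv"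
proof -
  have [measurable]: "\<phi> n \<in> borel_measurable (lebesgue_on \<Omega>)" "cgrad (\<phi> n) \<in> borel_measurable (lebesgue_on \<Omega>)" for n
    using test_function.borel_measurable test_function.borel_measurable_cgrad test_function.intro[OF \<phi>] by blast+
  have integrable: "integrable (lebesgue_on \<Omega>) (H1_sqdist (\<phi> n) v Gv)" for n
  proof (rule Bochner_Integration.integrable_bound[OF B(1)])
    show "H1_sqdist (\<phi> n) v Gv \<in> borel_measurable (lebesgue_on \<Omega>)"
      unfolding H1_sqdist_def[abs_def] by measurable
    show "AE x in lebesgue_on \<Omega>. norm (H1_sqdist (\<phi> n) v Gv x) \<le> norm (B n x)"
      using bound[of n]
    proof eventually_elim
      case (elim x)
      then show ?case using H1_sqdist_nonneg[of "\<phi> n" v Gv x] abs_ge_self[of "B n x"] by simp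
    qed
  qed
  note integrable_power2_of_H1_sqdist[OF assms(1,2) \<phi> integrable]
  moreover have "(\<lambda>n. \<integral>x. H1_sqdist (\<phi> n) v Gv x \<partial>lebesgue_on \<Omega>) \<longlonglongrightarrow> 0"
  proof (rule tendsto_sandwich[OF _ _ tendsto_const B(2)])
    show "\<forall>\<^sub>F n in sequentially. 0 \<le> \<integral>x. H1_sqdist (\<phi> n) v Gv x \<partial>lebesgue_on \<Omega>"
      by (simp add: H1_sqdist_nonneg)
    show "\<forall>\<^sub>F n in sequentially. (\<integral>x. H1_sqdist (\<phi> n) v Gv x \<partial>lebesgue_on \<Omega>) \<le> (\<integral>x. B n x \<partial>lebesgue_on \<Omega>)"
      by (intro always_eventually allI integral_mono_AE integrable B(1) bound)
  qed
  ultimately show ?thesis unfolding H10_iff using \<phi> by auto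
qed


lemma H10_comp_mult:
  assumes H: "H10 \<Omega> u G" and \<psi>: "test_fun \<Omega> \<psi>"
    and F_smooth: "\<And>\<phi>::'a \<Rightarrow> real. smooth_fun \<phi> \<Longrightarrow> smooth_fun (\<lambda>x. F (\<phi> x))"
    and F': "\<And>t. (F has_real_derivative F' t) (at t)" "\<And>t. \<bar>F' t\<bar> \<le> L" "continuous_on UNIV F'"
  shows "H10 \<Omega> (\<lambda>x. F (u x) * \<psi> x) (\<lambda>x. (F' (u x) * \<psi> x) *\<^sub>R G x + F (u x) *\<^sub>R cgrad \<psi> x)"
proof -
  interpret \<psi>: test_function \<Omega> \<psi> by (rule test_function.intro) fact
  obtain P Q where P: "\<And>x. \<bar>\<psi> x\<bar> \<le> P" and Q: "\<And>x. norm (cgrad \<psi> x) \<le> Q"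
    using \<psi>.bounded \<psi>.bounded_cgrad by metis
  obtain \<phi> where \<phi>: "\<And>k. test_fun \<Omega> (\<phi> k)" "\<And>k. integrable (lebesgue_on \<Omega>) (H1_sqdist (\<phi> k) u G)"
      "(\<lambda>k. \<integral>x. H1_sqdist (\<phi> k) u G x \<partial>lebesgue_on \<Omega>) \<longlonglongrightarrow> 0"
      "AE x in lebesgue_on \<Omega>. (\<lambda>k. \<phi> k x) \<longlonglongrightarrow> u x"
    using H10_approximation[OF H] by blast
  have [measurable]: "u \<in> borel_measurable (lebesgue_on \<Omega>)" "G \<in> borel_measurable (lebesgue_on \<Omega>)"
    and G2: "integrable (lebesgue_on \<Omega>) (\<lambda>x. (norm (G x))\<^sup>2)"
    using H unfolding H10_iff by auto
  have [measurable]: "\<phi> k \<in> borel_measurable (lebesgue_on \<Omega>)" for k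
    using test_function.borel_measurable test_function.intro[OF \<phi>(1)] by blast
  have [measurable]: "F \<in> borel_measurable borel" "F' \<in> borel_measurable borel"
    using F'(1,3) by (auto intro!: borel_measurable_continuous_onI continuous_at_imp_continuous_on DERIV_isCont)
  have Lipschitz: "\<bar>F a - F b\<bar> \<le> L * \<bar>a - b\<bar>" for a b
    by (rule abs_diff_le_of_deriv_bound[OF F'(1,2)])
  define T where "T n x = (F' (\<phi> n x) - F' (u x))\<^sup>2 * (norm (G x))\<^sup>2" for n x
  note T = tendsto_integral_power2_comp_diff[OF _ _ _ \<phi>(4) F'(3,2) G2, folded T_def]
  define C1 C2 where "C1 = 4 * L\<^sup>2 * P\<^sup>2 + 3 * L\<^sup>2 * Q\<^sup>2" and "C2 = 3 * P\<^sup>2"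
  show ?thesis
  proof (rule H10I[where \<phi>="\<lambda>n x. F (\<phi> n x) * \<psi> x" and B="\<lambda>n x. C1 * H1_sqdist (\<phi> n) u G x + C2 * T n x"])
    show "(\<lambda>x. F (u x) * \<psi> x) \<in> borel_measurable (lebesgue_on \<Omega>)"
      "(\<lambda>x. (F' (u x) * \<psi> x) *\<^sub>R G x + F (u x) *\<^sub>R cgrad \<psi> x) \<in> borel_measurable (lebesgue_on \<Omega>)"
      using \<psi>.borel_measurable \<psi>.borel_measurable_cgrad by measurable
    show "test_fun \<Omega> (\<lambda>x. F (\<phi> n x) * \<psi> x)" for n
      by (rule test_fun_mult[OF \<psi> F_smooth[OF test_function.smooth]]) (rule test_function.intro[OF \<phi>(1)])
    show "AE x in lebesgue_on \<Omega>. H1_sqdist (\<lambda>x. F (\<phi> n x) * \<psi> x) (\<lambda>x. F (u x) * \<psi> x)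
        (\<lambda>x. (F' (u x) * \<psi> x) *\<^sub>R G x + F (u x) *\<^sub>R cgrad \<psi> x) x \<le> C1 * H1_sqdist (\<phi> n) u G x + C2 * T n x" for n
    proof (rule AE_I2)
      fix x
      have "cgrad (\<lambda>x. F (\<phi> n x) * \<psi> x) x = (F' (\<phi> n x) * \<psi> x) *\<^sub>R cgrad (\<phi> n) x + F (\<phi> n x) *\<^sub>R cgrad \<psi> x"
        by (rule cgrad_comp_mult[OF test_function.smooth \<psi>.smooth F'(1)]) (rule test_function.intro[OF \<phi>(1)])
      then show "H1_sqdist (\<lambda>x. F (\<phi> n x) * \<psi> x) (\<lambda>x. F (u x) * \<psi> x)
          (\<lambda>x. (F' (u x) * \<psi> x) *\<^sub>R G x + F (u x) *\<^sub>R cgrad \<psi> x) x \<le> C1 * H1_sqdist (\<phi> n) u G x + C2 * T n x"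
        using chain_rule_error_le[where a="\<phi> n x" and b="u x" and g'="cgrad (\<phi> n) x" and g="G x",
            OF Lipschitz F'(2) P[of x] Q[of x]]
        by (simp add: H1_sqdist_def T_def C1_def C2_def)
    qed
    show "integrable (lebesgue_on \<Omega>) (\<lambda>x. C1 * H1_sqdist (\<phi> n) u G x + C2 * T n x)" for n
      using \<phi>(2) T(1) by auto
    show "(\<lambda>n. \<integral>x. C1 * H1_sqdist (\<phi> n) u G x + C2 * T n x \<partial>lebesgue_on \<Omega>) \<longlonglongrightarrow> 0"
      using tendsto_add[OF tendsto_mult_right_zero[OF \<phi>(3)] tendsto_mult_right_zero[OF T(2)]] \<phi>(2) T(1)
      by (simp add: mult.commute)
  qed
qed


lemma integrable_inner_Basis:
  fixes f :: "'a \<Rightarrow> 'a"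
  assumes "f \<in> borel_measurable (lebesgue_on \<Omega>)" "integrable (lebesgue_on \<Omega>) (\<lambda>x. (norm (f x))\<^sup>2)" "b \<in> Basis"
  shows "integrable (lebesgue_on \<Omega>) (\<lambda>x. f x \<bullet> b)"
proof (rule M.square_integrable_imp_integrable)
  show "integrable (lebesgue_on \<Omega>) (\<lambda>x. (f x \<bullet> b)\<^sup>2)"
    by (rule Bochner_Integration.integrable_bound[OF assms(2)])
       (use assms Basis_le_norm in \<open>auto intro!: AE_I2 power2_le_power2_of_abs_le\<close>)
qed (use assms(1) in \<open>intro borel_measurable_inner; simp\<close>)

lemma integral_H10_grad_eq_0:
  assumes H: "H10 \<Omega> w Gw" and b: "b \<in> Basis"
  shows "integrable (lebesgue_on \<Omega>) (\<lambda>x. Gw x \<bullet> b)" "(\<integral>x. Gw x \<bullet> b \<partial>lebesgue_on \<Omega>) = 0"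
proof -
  obtain \<phi> where \<phi>: "\<And>k. test_fun \<Omega> (\<phi> k)" "\<And>k. integrable (lebesgue_on \<Omega>) (H1_sqdist (\<phi> k) w Gw)"
      "(\<lambda>k. \<integral>x. H1_sqdist (\<phi> k) w Gw x \<partial>lebesgue_on \<Omega>) \<longlonglongrightarrow> 0"
    using H10_approximation[OF H] by (metis (no_types))
  have Gw: "Gw \<in> borel_measurable (lebesgue_on \<Omega>)" "integrable (lebesgue_on \<Omega>) (\<lambda>x. (norm (Gw x))\<^sup>2)"
    using H unfolding H10_iff by auto
  have \<phi>_grad: "cgrad (\<phi> k) \<in> borel_measurable (lebesgue_on \<Omega>)" for k
    using test_function.borel_measurable_cgrad test_function.intro[OF \<phi>(1)] by blast
  show integrable: "integrable (lebesgue_on \<Omega>) (\<lambda>x. Gw x \<bullet> b)"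
    by (rule integrable_inner_Basis[OF Gw b])
  define f where "f k x = (cgrad (\<phi> k) x - Gw x) \<bullet> b" for k x
  have "(f k x)\<^sup>2 \<le> H1_sqdist (\<phi> k) w Gw x" for k x
    unfolding f_def H1_sqdist_def
    using power2_le_power2_of_abs_le[OF Basis_le_norm[OF b, of "cgrad (\<phi> k) x - Gw x"]]
      zero_le_power2[of "\<phi> k x - w x"] by linarith
  moreover have "f k \<in> borel_measurable (lebesgue_on \<Omega>)" for k
    unfolding f_def using Gw(1) \<phi>_grad by (intro borel_measurable_inner borel_measurable_diff) auto
  ultimately have f_lim: "(\<lambda>k. \<integral>x. \<bar>f k x\<bar> \<partial>lebesgue_on \<Omega>) \<longlonglongrightarrow> 0"
    using M.tendsto_integral_abs_of_power2_le[OF _ \<phi>(2) _ \<phi>(3)] by blast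
  have "\<bar>\<integral>x. Gw x \<bullet> b \<partial>lebesgue_on \<Omega>\<bar> \<le> (\<integral>x. \<bar>f k x\<bar> \<partial>lebesgue_on \<Omega>)" for k
  proof -
    have "integrable (lebesgue_on \<Omega>) (\<lambda>x. cgrad (\<phi> k) x \<bullet> b)"
      by (rule integrable_inner_Basis[OF \<phi>_grad integrable_test_fun(2)[OF \<phi>(1)] b])
    then have "(\<integral>x. Gw x \<bullet> b \<partial>lebesgue_on \<Omega>) = - (\<integral>x. f k x \<partial>lebesgue_on \<Omega>)"
      using integrable test_function.integral_cgrad_eq_0[OF test_function.intro[OF \<phi>(1)] sets_domain b]
      by (simp add: f_def inner_diff_left)
    then show ?thesis by (simp add: integral_abs_bound)
  qed
  then show "(\<integral>x. Gw x \<bullet> b \<partial>lebesgue_on \<Omega>) = 0"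
    using LIMSEQ_le_const[OF f_lim] by (metis abs_le_zero_iff)
qed



text \<open>Apply \<open>integral_H10_grad_eq_0\<close> to \<open>F(u) \<partial>\<^sub>b\<psi>\<close> and sum over \<open>b\<close>.\<close>
lemma integral_H10_laplacian_identity:
  assumes H: "H10 \<Omega> u G" and \<psi>: "test_fun \<Omega> \<psi>"
    and F_smooth: "\<And>\<phi>::'a \<Rightarrow> real. smooth_fun \<phi> \<Longrightarrow> smooth_fun (\<lambda>x. F (\<phi> x))"
    and F': "\<And>t. (F has_real_derivative F' t) (at t)" "\<And>t. \<bar>F' t\<bar> \<le> L" "continuous_on UNIV F'"
  shows "integrable (lebesgue_on \<Omega>) (\<lambda>x. F' (u x) * (G x \<bullet> cgrad \<psi> x))"
    and "integrable (lebesgue_on \<Omega>) (\<lambda>x. F (u x) * laplacian \<psi> x)"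
    and "(\<integral>x. F' (u x) * (G x \<bullet> cgrad \<psi> x) \<partial>lebesgue_on \<Omega>) + (\<integral>x. F (u x) * laplacian \<psi> x \<partial>lebesgue_on \<Omega>) = 0"
proof -
  interpret \<psi>: test_function \<Omega> \<psi> by (rule test_function.intro) fact
  define g where "g b x = F' (u x) * dderiv b \<psi> x * (G x \<bullet> b) + F (u x) * dderiv b (dderiv b \<psi>) x" for b x
  have g: "integrable (lebesgue_on \<Omega>) (g b) \<and> (\<integral>x. g b x \<partial>lebesgue_on \<Omega>) = 0" if b: "b \<in> Basis" for b
  proof -
    have "H10 \<Omega> (\<lambda>x. F (u x) * dderiv b \<psi> x)
        (\<lambda>x. (F' (u x) * dderiv b \<psi> x) *\<^sub>R G x + F (u x) *\<^sub>R cgrad (dderiv b \<psi>) x)"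
      by (rule H10_comp_mult[OF H test_fun_dderiv[OF \<psi> b] F_smooth F'])
    note component = integral_H10_grad_eq_0[OF this b]
    have "(\<lambda>x. ((F' (u x) * dderiv b \<psi> x) *\<^sub>R G x + F (u x) *\<^sub>R cgrad (dderiv b \<psi>) x) \<bullet> b) = g b"
      using b by (simp add: fun_eq_iff g_def inner_add_left cgrad_inner_Basis)
    then show ?thesis using component by simp
  qed
  have sum_g: "(\<Sum>b\<in>Basis. g b x) = F' (u x) * (G x \<bullet> cgrad \<psi> x) + F (u x) * laplacian \<psi> x" for x
    unfolding g_def inner_cgrad laplacian_def
    by (simp add: sum.distrib sum_distrib_left algebra_simps)
  have [measurable]: "u \<in> borel_measurable (lebesgue_on \<Omega>)" "G \<in> borel_measurable (lebesgue_on \<Omega>)"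
    and G2: "integrable (lebesgue_on \<Omega>) (\<lambda>x. (norm (G x))\<^sup>2)"
    using H unfolding H10_iff by auto
  have [measurable]: "F' \<in> borel_measurable borel" using F'(3) by (rule borel_measurable_continuous_onI)
  obtain Q where Q: "\<And>x. norm (cgrad \<psi> x) \<le> Q" using \<psi>.bounded_cgrad by blast
  then have Q_nonneg: "Q \<ge> 0" using norm_ge_zero order_trans by blast
  have "integrable (lebesgue_on \<Omega>) (\<lambda>x. norm (G x))"
    by (rule M.square_integrable_imp_integrable) (use G2 in auto)
  then have "integrable (lebesgue_on \<Omega>) (\<lambda>x. L * Q * norm (G x))" by simp
  then show first: "integrable (lebesgue_on \<Omega>) (\<lambda>x. F' (u x) * (G x \<bullet> cgrad \<psi> x))"
  proof (rule Bochner_Integration.integrable_bound)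
    show "(\<lambda>x. F' (u x) * (G x \<bullet> cgrad \<psi> x)) \<in> borel_measurable (lebesgue_on \<Omega>)"
      using \<psi>.borel_measurable_cgrad
      by (intro borel_measurable_times borel_measurable_inner borel_measurable_continuous_on[OF F'(3)]) auto
    show "AE x in lebesgue_on \<Omega>. norm (F' (u x) * (G x \<bullet> cgrad \<psi> x)) \<le> norm (L * Q * norm (G x))"
    proof (rule AE_I2)
      fix x
      have "\<bar>G x \<bullet> cgrad \<psi> x\<bar> \<le> norm (G x) * norm (cgrad \<psi> x)" by (rule Cauchy_Schwarz_ineq2)
      also have "\<dots> \<le> norm (G x) * Q" by (rule mult_left_mono[OF Q]) simp
      finally have "\<bar>F' (u x)\<bar> * \<bar>G x \<bullet> cgrad \<psi> x\<bar> \<le> L * (norm (G x) * Q)"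
        by (rule mult_mono[OF F'(2)]) (use F'(2)[of 0] in auto)
      then show "norm (F' (u x) * (G x \<bullet> cgrad \<psi> x)) \<le> norm (L * Q * norm (G x))"
        using F'(2)[of 0] Q_nonneg by (simp add: abs_mult algebra_simps)
    qed
  qed
  have sum_integrable: "integrable (lebesgue_on \<Omega>) (\<lambda>x. \<Sum>b\<in>Basis. g b x)" using g by auto
  then show "integrable (lebesgue_on \<Omega>) (\<lambda>x. F (u x) * laplacian \<psi> x)"
    using Bochner_Integration.integrable_diff[OF sum_integrable first] by (simp add: sum_g)
  then have "(\<integral>x. F' (u x) * (G x \<bullet> cgrad \<psi> x) \<partial>lebesgue_on \<Omega>) + (\<integral>x. F (u x) * laplacian \<psi> x \<partial>lebesgue_on \<Omega>)
      = (\<integral>x. (\<Sum>b\<in>Basis. g b x) \<partial>lebesgue_on \<Omega>)"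
    using first by (simp add: sum_g)
  also have "\<dots> = 0" using g by (simp add: Bochner_Integration.integral_sum)
  finally show "(\<integral>x. F' (u x) * (G x \<bullet> cgrad \<psi> x) \<partial>lebesgue_on \<Omega>) + (\<integral>x. F (u x) * laplacian \<psi> x \<partial>lebesgue_on \<Omega>) = 0" .
qed

end

section \<open>The exponential estimate\<close>

lemma bump_lap_const_pos: "R > 0 \<Longrightarrow> n \<ge> 0 \<Longrightarrow> bump_lap_const R n > 0"
  unfolding bump_lap_const_def by (intro divide_pos_pos add_pos_nonneg zero_less_power) (auto intro: add_nonneg_pos)

lemma test_fun_bump:
  assumes "R > 0" "cball x0 R \<subseteq> \<Omega>"
  shows "test_fun \<Omega> (bump x0 R)"
  unfolding test_fun_def using assms bump_eq_0[of R _ x0] by (auto intro!: smooth_fun_bump exI[of _ "cball x0 R"])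

text \<open>Splitting at the level \<open>T = 2 / \<kappa>\<close>: \<open>exp (\<eta> u) \<le> exp (\<eta> T) + u exp (\<eta> u) / T\<close>, and the second
  term contributes at most half of the left-hand side.\<close>
lemma integral_exp_le_of_moment_bound:
  fixes u \<psi> :: "'a \<Rightarrow> real"
  assumes integrable: "integrable N (\<lambda>x. exp (\<eta> * u x) * \<psi> x)" "integrable N (\<lambda>x. u x * exp (\<eta> * u x) * \<psi> x)"
      "integrable N \<psi>"
    and nonneg: "AE x in N. 0 \<le> u x" "\<And>x. 0 \<le> \<psi> x" and "\<eta> \<ge> 0" "\<kappa> > 0"
    and moment: "\<kappa> * (\<integral>x. u x * exp (\<eta> * u x) * \<psi> x \<partial>N) \<le> (\<integral>x. exp (\<eta> * u x) * \<psi> x \<partial>N)"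
  shows "(\<integral>x. exp (\<eta> * u x) * \<psi> x \<partial>N) \<le> 2 * exp (2 * \<eta> / \<kappa>) * (\<integral>x. \<psi> x \<partial>N)"
proof -
  define T where "T = 2 / \<kappa>"
  have T: "T > 0" using \<open>\<kappa> > 0\<close> by (simp add: T_def)
  have split: "exp (\<eta> * t) \<le> exp (\<eta> * T) + t * exp (\<eta> * t) / T" if "t \<ge> 0" for t
  proof (cases "t \<le> T")
    case True
    then have "exp (\<eta> * t) \<le> exp (\<eta> * T)" using \<open>\<eta> \<ge> 0\<close> by (simp add: mult_left_mono)
    moreover have "0 \<le> t * exp (\<eta> * t) / T" using T that by simp
    ultimately show ?thesis by linarith
  next
    case False
    then have "exp (\<eta> * t) \<le> t * exp (\<eta> * t) / T" using T by (simp add: field_simps)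
    then show ?thesis by (simp add: add_increasing)
  qed
  have "(\<integral>x. exp (\<eta> * u x) * \<psi> x \<partial>N) \<le> (\<integral>x. exp (\<eta> * T) * \<psi> x + (u x * exp (\<eta> * u x) * \<psi> x) / T \<partial>N)"
  proof (rule integral_mono_AE)
    show "AE x in N. exp (\<eta> * u x) * \<psi> x \<le> exp (\<eta> * T) * \<psi> x + u x * exp (\<eta> * u x) * \<psi> x / T"
      using nonneg(1)
    proof eventually_elim
      case (elim x)
      show ?case using mult_right_mono[OF split[OF elim] nonneg(2)[of x]] by (simp add: algebra_simps)
    qed
  qed (use integrable in auto)
  also have "\<dots> = exp (\<eta> * T) * (\<integral>x. \<psi> x \<partial>N) + (\<integral>x. u x * exp (\<eta> * u x) * \<psi> x \<partial>N) / T"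
    using integrable by simp
  also have "(\<integral>x. u x * exp (\<eta> * u x) * \<psi> x \<partial>N) / T \<le> (\<integral>x. exp (\<eta> * u x) * \<psi> x \<partial>N) / 2"
    using moment \<open>\<kappa> > 0\<close> by (simp add: T_def field_simps)
  finally show ?thesis by (simp add: T_def mult.commute)
qed


context finite_domain
begin

lemma H10_integrable:
  assumes "H10 \<Omega> u G"
  shows "integrable (lebesgue_on \<Omega>) u"
proof -
  have "u \<in> borel_measurable (lebesgue_on \<Omega>)" "integrable (lebesgue_on \<Omega>) (\<lambda>x. (u x)\<^sup>2)"
    using assms unfolding H10_iff by blast+
  then show ?thesis by (rule M.square_integrable_imp_integrable)
qed

lemma integrable_weak_rhs:
  fixes \<mu> c h u v :: "'a \<Rightarrow> real"
  assumes H: "H10 \<Omega> u G" and \<mu>: "Linf_on \<Omega> \<mu>" and c: "Linf_on \<Omega> c" and h: "integrable (lebesgue_on \<Omega>) h"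
    and v: "v \<in> borel_measurable (lebesgue_on \<Omega>)" "\<And>x. \<bar>v x\<bar> \<le> V"
  shows "integrable (lebesgue_on \<Omega>) (\<lambda>x. (\<mu> x * (norm (G x))\<^sup>2 + lam * c x * u x + h x) * v x)"
proof -
  obtain B\<mu> Bc where [measurable]: "\<mu> \<in> borel_measurable (lebesgue_on \<Omega>)" "c \<in> borel_measurable (lebesgue_on \<Omega>)"
    and \<mu>_bound: "AE x in lebesgue_on \<Omega>. \<bar>\<mu> x\<bar> \<le> B\<mu>" and c_bound: "AE x in lebesgue_on \<Omega>. \<bar>c x\<bar> \<le> Bc"
    using \<mu> c unfolding Linf_on_iff by blast
  have lam_c_bound: "AE x in lebesgue_on \<Omega>. \<bar>lam * c x\<bar> \<le> \<bar>lam\<bar> * Bc"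
    using c_bound by eventually_elim (simp add: abs_mult mult_left_mono)
  have "integrable (lebesgue_on \<Omega>) (\<lambda>x. (norm (G x))\<^sup>2)" using H unfolding H10_iff by blast
  from integrable_mult_bounded[OF this _ \<mu>_bound] integrable_mult_bounded[OF H10_integrable[OF H] _ lam_c_bound]
  have "integrable (lebesgue_on \<Omega>) (\<lambda>x. \<mu> x * (norm (G x))\<^sup>2 + lam * c x * u x + h x)"
    using h by (simp add: mult.commute mult.left_commute)
  then show ?thesis by (rule integrable_mult_bounded[OF _ v(1) AE_I2[OF v(2)]])
qed

lemma sat_exp_test_le:
  fixes u p g m k h :: real
  assumes "0 \<le> u" "0 \<le> h" "0 \<le> p" "0 \<le> g" "p \<noteq> 0 \<Longrightarrow> \<eta> \<le> m \<and> \<eta> \<le> k"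
    and "\<Lambda>\<^sub>1 \<le> lam" "0 < \<Lambda>\<^sub>1" "0 < \<eta>" "0 < \<epsilon>"
  shows "\<Lambda>\<^sub>1 * \<eta> * (u * sat_exp \<eta> \<epsilon> u * p) \<le> (m * g + lam * k * u + h) * (sat_exp \<eta> \<epsilon> u * p) - sat_exp_deriv \<eta> \<epsilon> u * p * g"
proof (cases "p = 0")
  case False
  then have "\<eta> \<le> m" "\<eta> \<le> k" using assms(5) by auto
  have F: "0 < sat_exp \<eta> \<epsilon> u" "sat_exp_deriv \<eta> \<epsilon> u \<le> \<eta> * sat_exp \<eta> \<epsilon> u"
    using sat_exp_pos sat_exp_deriv_le assms(8,9) by auto
  have "0 \<le> (m * sat_exp \<eta> \<epsilon> u - sat_exp_deriv \<eta> \<epsilon> u) * p * g"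
    using F \<open>\<eta> \<le> m\<close> assms(3,4) by (intro mult_nonneg_nonneg) (auto intro: order_trans[OF _ mult_right_mono])
  moreover have "\<Lambda>\<^sub>1 * \<eta> * (u * sat_exp \<eta> \<epsilon> u * p) \<le> lam * k * (u * sat_exp \<eta> \<epsilon> u * p)"
    using F assms \<open>\<eta> \<le> k\<close> by (intro mult_right_mono mult_mono) auto
  moreover have "0 \<le> h * sat_exp \<eta> \<epsilon> u * p" using F assms(2,3) by simp
  ultimately show ?thesis by (simp add: algebra_simps)
qed simp

text \<open>Testing the equation with \<open>v = F(u) \<psi>\<close>, \<open>F = sat_exp \<eta> \<epsilon>\<close>: as \<open>F' \<le> \<eta> F \<le> \<mu> F\<close> where \<open>\<psi> \<noteq> 0\<close>,
  the gradient term \<open>F'(u) \<psi> |\<nabla>u|\<^sup>2\<close> is absorbed by \<open>\<mu> |\<nabla>u|\<^sup>2 F(u) \<psi>\<close>, and \<open>h\<close> can be dropped.\<close>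
lemma weak_solution_sat_exp_test:
  fixes \<mu> c h u \<psi> :: "'a \<Rightarrow> real" and G :: "'a \<Rightarrow> 'a"
  assumes H: "H10 \<Omega> u G"
    and weak: "\<And>v Gv. H10 \<Omega> v Gv \<Longrightarrow> Linf_on \<Omega> v \<Longrightarrow> (\<integral>x. G x \<bullet> Gv x \<partial>lebesgue_on \<Omega>) =
      (\<integral>x. (\<mu> x * (norm (G x))\<^sup>2 + lam * c x * u x + h x) * v x \<partial>lebesgue_on \<Omega>)"
    and u: "AE x in lebesgue_on \<Omega>. 0 \<le> u x"
    and \<mu>: "Linf_on \<Omega> \<mu>" and c: "Linf_on \<Omega> c"
    and h: "integrable (lebesgue_on \<Omega>) h" "AE x in lebesgue_on \<Omega>. 0 \<le> h x"
    and \<psi>: "test_fun \<Omega> \<psi>" "\<And>x. 0 \<le> \<psi> x" "\<And>x. \<psi> x \<le> 1"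
    and lower: "AE x in lebesgue_on \<Omega>. \<psi> x \<noteq> 0 \<longrightarrow> \<eta> \<le> \<mu> x \<and> \<eta> \<le> c x"
    and \<eta>: "\<eta> > 0" and \<epsilon>: "\<epsilon> > 0" and lam: "\<Lambda>\<^sub>1 \<le> lam" "0 < \<Lambda>\<^sub>1"
  shows "integrable (lebesgue_on \<Omega>) (\<lambda>x. \<Lambda>\<^sub>1 * \<eta> * (u x * sat_exp \<eta> \<epsilon> (u x) * \<psi> x))"
    and "(\<integral>x. \<Lambda>\<^sub>1 * \<eta> * (u x * sat_exp \<eta> \<epsilon> (u x) * \<psi> x) \<partial>lebesgue_on \<Omega>)
      \<le> (\<integral>x. sat_exp \<eta> \<epsilon> (u x) * (G x \<bullet> cgrad \<psi> x) \<partial>lebesgue_on \<Omega>)"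
proof -
  interpret \<psi>: test_function \<Omega> \<psi> by (rule test_function.intro) fact
  let ?M = "lebesgue_on \<Omega>"
  let ?F = "sat_exp \<eta> \<epsilon>" and ?F' = "sat_exp_deriv \<eta> \<epsilon>"
  define v where "v x = ?F (u x) * \<psi> x" for x
  define Gv where "Gv x = (?F' (u x) * \<psi> x) *\<^sub>R G x + ?F (u x) *\<^sub>R cgrad \<psi> x" for x
  define A1 where "A1 x = ?F' (u x) * \<psi> x * (norm (G x))\<^sup>2" for x
  define A2 where "A2 x = ?F (u x) * (G x \<bullet> cgrad \<psi> x)" for x
  define R where "R x = (\<mu> x * (norm (G x))\<^sup>2 + lam * c x * u x + h x) * v x" for x
  have [measurable]: "u \<in> borel_measurable ?M" "G \<in> borel_measurable ?M"
    and G2: "integrable ?M (\<lambda>x. (norm (G x))\<^sup>2)"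
    using H unfolding H10_iff by auto
  have [measurable]: "?F \<in> borel_measurable borel" "?F' \<in> borel_measurable borel"
    using continuous_sat_exp[OF \<epsilon> \<eta>] continuous_sat_exp_deriv[OF \<epsilon> \<eta>] by (auto intro: borel_measurable_continuous_onI)
  note [measurable] = \<psi>.borel_measurable[of \<Omega>] \<psi>.borel_measurable_cgrad[of \<Omega>]
  have v_le: "\<bar>v x\<bar> \<le> 1 / \<epsilon>" for x
    using mult_mono[OF abs_sat_exp_le[OF \<epsilon> \<eta>], of "\<bar>\<psi> x\<bar>" 1] \<psi>(2,3)[of x] \<epsilon> by (simp add: v_def abs_mult)
  have v_measurable [measurable]: "v \<in> borel_measurable ?M" unfolding v_def[abs_def] by measurable
  have Hv: "H10 \<Omega> v Gv"
    unfolding v_def[abs_def] Gv_def[abs_def]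
    by (rule H10_comp_mult[OF H \<psi>(1) smooth_fun_sat_exp[OF \<epsilon>] sat_exp_has_real_derivative[OF \<epsilon>]
          abs_sat_exp_deriv_le[OF \<epsilon> \<eta>] continuous_sat_exp_deriv[OF \<epsilon> \<eta>]])
  moreover have "Linf_on \<Omega> v" unfolding Linf_on_iff using v_le v_measurable by blast
  ultimately have weak_v: "(\<integral>x. G x \<bullet> Gv x \<partial>?M) = (\<integral>x. R x \<partial>?M)"
    unfolding R_def by (rule weak)
  have A1: "integrable ?M A1"
    unfolding A1_def using integrable_mult_bounded[OF G2, of "\<lambda>x. ?F' (u x) * \<psi> x" "\<eta> / \<epsilon>"]
      mult_mono[OF abs_sat_exp_deriv_le[OF \<epsilon> \<eta>], of "\<bar>\<psi> _\<bar>" 1] \<psi>(2,3) \<eta> \<epsilon>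
    by (force simp: abs_mult mult.commute)
  have A2: "integrable ?M A2"
    unfolding A2_def
    by (rule integral_H10_laplacian_identity(1)[OF H \<psi>(1) smooth_fun_sat_exp_prim[OF \<epsilon> \<eta>]
          sat_exp_prim_has_real_derivative[OF \<epsilon> \<eta>] abs_sat_exp_le[OF \<epsilon> \<eta>] continuous_sat_exp[OF \<epsilon> \<eta>]])
  have R: "integrable ?M R"
    unfolding R_def by (rule integrable_weak_rhs[OF H \<mu> c h(1) v_measurable]) (use v_le in auto)
  have L: "integrable ?M (\<lambda>x. \<Lambda>\<^sub>1 * \<eta> * (u x * ?F (u x) * \<psi> x))"
  proof -
    have "\<bar>\<Lambda>\<^sub>1 * \<eta> * v x\<bar> \<le> \<Lambda>\<^sub>1 * \<eta> * (1 / \<epsilon>)" for x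
      using mult_left_mono[OF v_le[of x], of "\<Lambda>\<^sub>1 * \<eta>"] lam \<eta> by (simp add: abs_mult)
    then have "integrable ?M (\<lambda>x. u x * (\<Lambda>\<^sub>1 * \<eta> * v x))"
      by (intro integrable_mult_bounded[OF H10_integrable[OF H]] AE_I2) auto
    then show ?thesis by (simp add: v_def algebra_simps)
  qed
  then show "integrable ?M (\<lambda>x. \<Lambda>\<^sub>1 * \<eta> * (u x * ?F (u x) * \<psi> x))" .
  have "AE x in ?M. \<Lambda>\<^sub>1 * \<eta> * (u x * ?F (u x) * \<psi> x) \<le> R x - A1 x"
    using u h(2) lower
  proof eventually_elim
    case (elim x)
    then show ?case
      using sat_exp_test_le[of "u x" "h x" "\<psi> x" "(norm (G x))\<^sup>2" \<eta> "\<mu> x" "c x", OF _ _ \<psi>(2) zero_le_power2 _ lam \<eta> \<epsilon>]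
      by (simp add: R_def A1_def v_def)
  qed
  then have "(\<integral>x. \<Lambda>\<^sub>1 * \<eta> * (u x * ?F (u x) * \<psi> x) \<partial>?M) \<le> (\<integral>x. R x - A1 x \<partial>?M)"
    using L R A1 by (intro integral_mono_AE) auto
  also have "\<dots> = (\<integral>x. A2 x \<partial>?M)"
  proof -
    have "G x \<bullet> Gv x = A1 x + A2 x" for x
      by (simp add: Gv_def A1_def A2_def inner_add_right power2_norm_eq_inner algebra_simps)
    then show ?thesis using weak_v R A1 A2 by simp
  qed
  finally show "(\<integral>x. \<Lambda>\<^sub>1 * \<eta> * (u x * ?F (u x) * \<psi> x) \<partial>?M) \<le> (\<integral>x. ?F (u x) * (G x \<bullet> cgrad \<psi> x) \<partial>?M)"
    by (simp add: A2_def)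
qed


lemma integrable_exp_moments:
  fixes u g :: "'a \<Rightarrow> real"
  assumes [measurable]: "u \<in> borel_measurable (lebesgue_on \<Omega>)" "g \<in> borel_measurable (lebesgue_on \<Omega>)"
    and u: "AE x in lebesgue_on \<Omega>. 0 \<le> u x \<and> u x \<le> B" and g: "\<And>x. \<bar>g x\<bar> \<le> 1" and "\<eta> \<ge> 0"
  shows "integrable (lebesgue_on \<Omega>) (\<lambda>x. exp (\<eta> * u x) * g x)"
    and "integrable (lebesgue_on \<Omega>) (\<lambda>x. u x * exp (\<eta> * u x) * g x)"
proof -
  have "AE x in lebesgue_on \<Omega>. \<bar>exp (\<eta> * u x) * g x\<bar> \<le> exp (\<eta> * B) \<and> \<bar>u x * exp (\<eta> * u x) * g x\<bar> \<le> B * exp (\<eta> * B)"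
    using u
  proof eventually_elim
    case (elim x)
    have "exp (\<eta> * u x) \<le> exp (\<eta> * B)" using elim \<open>\<eta> \<ge> 0\<close> by (simp add: mult_left_mono)
    then show ?case using elim mult_mono[OF _ g[of x]] by (simp add: abs_mult mult_mono)
  qed
  then have "AE x in lebesgue_on \<Omega>. norm (exp (\<eta> * u x) * g x) \<le> exp (\<eta> * B)"
    and "AE x in lebesgue_on \<Omega>. norm (u x * exp (\<eta> * u x) * g x) \<le> B * exp (\<eta> * B)"
    by (auto elim: eventually_mono)
  then show "integrable (lebesgue_on \<Omega>) (\<lambda>x. exp (\<eta> * u x) * g x)"
    and "integrable (lebesgue_on \<Omega>) (\<lambda>x. u x * exp (\<eta> * u x) * g x)"
    by (auto intro!: M.integrable_const_bound)
qed

lemma weak_solution_exp_moment_bound: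
  fixes \<mu> c h u \<psi> :: "'a \<Rightarrow> real" and G :: "'a \<Rightarrow> 'a"
  assumes H: "H10 \<Omega> u G"
    and weak: "\<And>v Gv. H10 \<Omega> v Gv \<Longrightarrow> Linf_on \<Omega> v \<Longrightarrow> (\<integral>x. G x \<bullet> Gv x \<partial>lebesgue_on \<Omega>) =
      (\<integral>x. (\<mu> x * (norm (G x))\<^sup>2 + lam * c x * u x + h x) * v x \<partial>lebesgue_on \<Omega>)"
    and u: "AE x in lebesgue_on \<Omega>. 0 \<le> u x \<and> u x \<le> B"
    and \<mu>: "Linf_on \<Omega> \<mu>" and c: "Linf_on \<Omega> c"
    and h: "integrable (lebesgue_on \<Omega>) h" "AE x in lebesgue_on \<Omega>. 0 \<le> h x"
    and \<psi>: "test_fun \<Omega> \<psi>" "\<And>x. 0 \<le> \<psi> x" "\<And>x. \<psi> x \<le> 1"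
    and lower: "AE x in lebesgue_on \<Omega>. \<psi> x \<noteq> 0 \<longrightarrow> \<eta> \<le> \<mu> x \<and> \<eta> \<le> c x"
    and laplacian: "\<And>x. - laplacian \<psi> x \<le> K * \<psi> x" and K: "K \<ge> 0"
    and \<eta>: "\<eta> > 0" and lam: "\<Lambda>\<^sub>1 \<le> lam" "0 < \<Lambda>\<^sub>1"
  shows "integrable (lebesgue_on \<Omega>) (\<lambda>x. exp (\<eta> * u x) * \<psi> x)"
    and "integrable (lebesgue_on \<Omega>) (\<lambda>x. u x * exp (\<eta> * u x) * \<psi> x)"
    and "\<Lambda>\<^sub>1 * \<eta> / 2 * (\<integral>x. u x * exp (\<eta> * u x) * \<psi> x \<partial>lebesgue_on \<Omega>)
      \<le> K / \<eta> * (\<integral>x. exp (\<eta> * u x) * \<psi> x \<partial>lebesgue_on \<Omega>)"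
proof -
  interpret \<psi>: test_function \<Omega> \<psi> by (rule test_function.intro) fact
  let ?M = "lebesgue_on \<Omega>"
  define \<epsilon> where "\<epsilon> = exp (- \<eta> * max B 0)"
  have \<epsilon>: "\<epsilon> > 0" by (simp add: \<epsilon>_def)
  have [measurable]: "u \<in> borel_measurable ?M" using H unfolding H10_iff by auto
  have u': "AE x in ?M. 0 \<le> u x \<and> u x \<le> max B 0" using u by eventually_elim auto
  show exp_integrable: "integrable ?M (\<lambda>x. exp (\<eta> * u x) * \<psi> x)"
    and moment_integrable: "integrable ?M (\<lambda>x. u x * exp (\<eta> * u x) * \<psi> x)"
    using integrable_exp_moments[OF _ \<psi>.borel_measurable u'] \<psi>(2,3) \<eta> by auto
  note test = weak_solution_sat_exp_test[OF H weak _ \<mu> c h \<psi> lower \<eta> \<epsilon> lam]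
  note identity = integral_H10_laplacian_identity[OF H \<psi>(1) smooth_fun_sat_exp_prim[OF \<epsilon> \<eta>]
      sat_exp_prim_has_real_derivative[OF \<epsilon> \<eta>] abs_sat_exp_le[OF \<epsilon> \<eta>] continuous_sat_exp[OF \<epsilon> \<eta>]]
  have "AE x in ?M. \<Lambda>\<^sub>1 * \<eta> / 2 * (u x * exp (\<eta> * u x) * \<psi> x) \<le> \<Lambda>\<^sub>1 * \<eta> * (u x * sat_exp \<eta> \<epsilon> (u x) * \<psi> x)"
    using u'
  proof eventually_elim
    case (elim x)
    have "u x * exp (\<eta> * u x) / 2 \<le> u x * sat_exp \<eta> \<epsilon> (u x)"
      using mult_left_mono[OF sat_exp_ge_half[OF \<eta>, of "u x" "max B 0"]] elim by (simp add: \<epsilon>_def)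
    then have "(\<Lambda>\<^sub>1 * \<eta> * \<psi> x) * (u x * exp (\<eta> * u x) / 2) \<le> (\<Lambda>\<^sub>1 * \<eta> * \<psi> x) * (u x * sat_exp \<eta> \<epsilon> (u x))"
      by (rule mult_left_mono) (use lam \<eta> \<psi>(2)[of x] in simp)
    then show ?case by (simp add: algebra_simps)
  qed
  then have "\<Lambda>\<^sub>1 * \<eta> / 2 * (\<integral>x. u x * exp (\<eta> * u x) * \<psi> x \<partial>?M)
      \<le> (\<integral>x. \<Lambda>\<^sub>1 * \<eta> * (u x * sat_exp \<eta> \<epsilon> (u x) * \<psi> x) \<partial>?M)"
    using moment_integrable test(1) u by (subst integral_mult_right_zero[symmetric]) (intro integral_mono_AE, auto)
  also have "\<dots> \<le> (\<integral>x. sat_exp \<eta> \<epsilon> (u x) * (G x \<bullet> cgrad \<psi> x) \<partial>?M)"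
    by (rule test(2)) (use u in auto)
  also have "\<dots> = (\<integral>x. - (sat_exp_prim \<eta> \<epsilon> (u x) * laplacian \<psi> x) \<partial>?M)"
    using identity by simp
  also have "\<dots> \<le> (\<integral>x. K / \<eta> * (exp (\<eta> * u x) * \<psi> x) \<partial>?M)"
  proof (rule integral_mono)
    fix x
    have "sat_exp_prim \<eta> \<epsilon> (u x) * - laplacian \<psi> x \<le> sat_exp_prim \<eta> \<epsilon> (u x) * (K * \<psi> x)"
      by (rule mult_left_mono[OF laplacian sat_exp_prim_nonneg[OF \<epsilon> \<eta>]])
    also have "\<dots> \<le> exp (\<eta> * u x) / \<eta> * (K * \<psi> x)"
      by (rule mult_right_mono[OF sat_exp_prim_le[OF \<epsilon> \<eta>]]) (use K \<psi>(2) in simp)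
    finally show "- (sat_exp_prim \<eta> \<epsilon> (u x) * laplacian \<psi> x) \<le> K / \<eta> * (exp (\<eta> * u x) * \<psi> x)"
      by (simp add: field_simps)
  qed (use identity exp_integrable in auto)
  finally show "\<Lambda>\<^sub>1 * \<eta> / 2 * (\<integral>x. u x * exp (\<eta> * u x) * \<psi> x \<partial>?M) \<le> K / \<eta> * (\<integral>x. exp (\<eta> * u x) * \<psi> x \<partial>?M)"
    by simp
qed


lemma set_integral_le_weighted:
  fixes f \<psi> :: "'a \<Rightarrow> real"
  assumes A: "A \<in> sets lebesgue" "A \<subseteq> \<Omega>"
    and f: "integrable (lebesgue_on \<Omega>) f" "integrable (lebesgue_on \<Omega>) (\<lambda>x. f x * \<psi> x)" "\<And>x. 0 \<le> f x"
    and \<psi>: "\<And>x. 0 \<le> \<psi> x" "\<And>x. x \<in> A \<Longrightarrow> \<delta> \<le> \<psi> x" and "\<delta> > 0"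
  shows "set_lebesgue_integral lebesgue A f \<le> (\<integral>x. f x * \<psi> x \<partial>lebesgue_on \<Omega>) / \<delta>"
proof -
  have "set_integrable lebesgue A f"
    using set_integrable_subset[of lebesgue \<Omega> f A] f(1) A by (simp add: set_integrable_iff)
  moreover have "set_integrable lebesgue \<Omega> (\<lambda>x. f x * \<psi> x / \<delta>)" using f(2) by (simp add: set_integrable_iff)
  ultimately have "set_lebesgue_integral lebesgue A f \<le> set_lebesgue_integral lebesgue \<Omega> (\<lambda>x. f x * \<psi> x / \<delta>)"
    unfolding set_lebesgue_integral_def set_integrable_def
  proof (rule integral_mono)
    fix x
    show "indicator A x *\<^sub>R f x \<le> indicator \<Omega> x *\<^sub>R (f x * \<psi> x / \<delta>)"
    proof (cases "x \<in> A")
      case True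
      then have "f x * \<delta> \<le> f x * \<psi> x" using \<psi>(2) f(3) by (simp add: mult_left_mono)
      then show ?thesis using True A(2) \<open>\<delta> > 0\<close> by (auto simp: field_simps)
    qed (use f(3) \<psi>(1) \<open>\<delta> > 0\<close> in \<open>simp add: indicator_def\<close>)
  qed
  then show ?thesis by (simp add: set_integral_eq)
qed


lemma weak_solution_exp_integral_le:
  fixes \<mu> c h u \<psi> :: "'a \<Rightarrow> real" and G :: "'a \<Rightarrow> 'a"
  assumes H: "H10 \<Omega> u G"
    and weak: "\<And>v Gv. H10 \<Omega> v Gv \<Longrightarrow> Linf_on \<Omega> v \<Longrightarrow> (\<integral>x. G x \<bullet> Gv x \<partial>lebesgue_on \<Omega>) =
      (\<integral>x. (\<mu> x * (norm (G x))\<^sup>2 + lam * c x * u x + h x) * v x \<partial>lebesgue_on \<Omega>)"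
    and u: "AE x in lebesgue_on \<Omega>. 0 \<le> u x \<and> u x \<le> B"
    and \<mu>: "Linf_on \<Omega> \<mu>" and c: "Linf_on \<Omega> c"
    and h: "integrable (lebesgue_on \<Omega>) h" "AE x in lebesgue_on \<Omega>. 0 \<le> h x"
    and \<psi>: "test_fun \<Omega> \<psi>" "\<And>x. 0 \<le> \<psi> x" "\<And>x. \<psi> x \<le> 1"
    and lower: "AE x in lebesgue_on \<Omega>. \<psi> x \<noteq> 0 \<longrightarrow> \<eta> \<le> \<mu> x \<and> \<eta> \<le> c x"
    and laplacian: "\<And>x. - laplacian \<psi> x \<le> K * \<psi> x" and K: "K > 0"
    and \<eta>: "\<eta> > 0" and lam: "\<Lambda>\<^sub>1 \<le> lam" "0 < \<Lambda>\<^sub>1"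
  shows "(\<integral>x. exp (\<eta> * u x) * \<psi> x \<partial>lebesgue_on \<Omega>) \<le> 2 * exp (4 * K / (\<Lambda>\<^sub>1 * \<eta>)) * (\<integral>x. \<psi> x \<partial>lebesgue_on \<Omega>)"
proof -
  let ?M = "lebesgue_on \<Omega>"
  note moment = weak_solution_exp_moment_bound[OF H weak u \<mu> c h \<psi> lower laplacian less_imp_le[OF K] \<eta> lam]
  have \<psi>_integrable: "integrable ?M \<psi>"
    using \<psi>(2,3) test_function.borel_measurable[OF test_function.intro[OF \<psi>(1)]]
    by (intro M.integrable_const_bound[where B=1] AE_I2) auto
  define \<kappa> where "\<kappa> = \<Lambda>\<^sub>1 * \<eta>\<^sup>2 / (2 * K)"
  have \<kappa>: "\<kappa> > 0" using K \<eta> lam by (simp add: \<kappa>_def)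
  have "\<kappa> * (\<integral>x. u x * exp (\<eta> * u x) * \<psi> x \<partial>?M) \<le> (\<integral>x. exp (\<eta> * u x) * \<psi> x \<partial>?M)"
    using mult_left_mono[OF moment(3), of "\<eta> / K"] K \<eta> by (simp add: \<kappa>_def power2_eq_square field_simps)
  moreover have "AE x in ?M. 0 \<le> u x" using u by eventually_elim auto
  ultimately have "(\<integral>x. exp (\<eta> * u x) * \<psi> x \<partial>?M) \<le> 2 * exp (2 * \<eta> / \<kappa>) * (\<integral>x. \<psi> x \<partial>?M)"
    using \<eta> \<kappa> \<psi>(2) by (intro integral_exp_le_of_moment_bound moment(1,2) \<psi>_integrable) auto
  also have "2 * \<eta> / \<kappa> = 4 * K / (\<Lambda>\<^sub>1 * \<eta>)"
    using K \<eta> lam by (simp add: \<kappa>_def power2_eq_square field_simps)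
  finally show ?thesis .
qed

lemma solution_exp_integral_le:
  fixes \<mu> c h u :: "'a \<Rightarrow> real"
  assumes sol: "is_solution \<Omega> \<mu> c h lam u" "AE x in lebesgue. x \<in> \<Omega> \<longrightarrow> u x \<ge> 0"
    and \<mu>: "Linf_on \<Omega> \<mu>" and c: "Linf_on \<Omega> c"
    and h: "integrable (lebesgue_on \<Omega>) h" "AE x in lebesgue. x \<in> \<Omega> \<longrightarrow> h x \<ge> 0"
    and ball: "\<rho> > 0" "ball x\<^sub>0 \<rho> \<subseteq> \<Omega>"
    and lower: "AE x in lebesgue. x \<in> ball x\<^sub>0 \<rho> \<longrightarrow> \<mu> x \<ge> \<eta>" "AE x in lebesgue. x \<in> ball x\<^sub>0 \<rho> \<longrightarrow> c x \<ge> \<eta>"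
    and \<eta>: "\<eta> > 0" and lam: "\<Lambda>\<^sub>1 \<le> lam" "0 < \<Lambda>\<^sub>1"
  defines "\<psi> \<equiv> bump x\<^sub>0 (3 * \<rho> / 4)" and "K \<equiv> bump_lap_const (3 * \<rho> / 4) (real DIM('a))"
  shows "set_lebesgue_integral lebesgue (ball x\<^sub>0 (\<rho> / 2)) (\<lambda>x. exp (\<eta> * u x))
    \<le> 2 * exp (4 * K / (\<Lambda>\<^sub>1 * \<eta>)) * (\<integral>x. \<psi> x \<partial>lebesgue_on \<Omega>) / exp (- 16 / (5 * \<rho>\<^sup>2))"
proof -
  let ?M = "lebesgue_on \<Omega>"
  obtain G B where H: "H10 \<Omega> u G" and u_bound: "AE x in ?M. \<bar>u x\<bar> \<le> B"
    and weak: "\<And>v Gv. H10 \<Omega> v Gv \<Longrightarrow> Linf_on \<Omega> v \<Longrightarrow> (\<integral>x. G x \<bullet> Gv x \<partial>?M) =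
      (\<integral>x. (\<mu> x * (norm (G x))\<^sup>2 + lam * c x * u x + h x) * v x \<partial>?M)"
    using sol(1) unfolding is_solution_def Linf_on_iff set_integral_eq by blast
  have "AE x in ?M. 0 \<le> u x" using sol(2) by (simp add: AE_iff)
  with u_bound have u: "AE x in ?M. 0 \<le> u x \<and> u x \<le> B" by eventually_elim auto
  have \<psi>: "test_fun \<Omega> \<psi>" "\<And>x. 0 \<le> \<psi> x" "\<And>x. \<psi> x \<le> 1"
    using ball by (auto simp: \<psi>_def bump_nonneg bump_le_1 intro!: test_fun_bump)
  have "\<psi> x = 0" if "x \<notin> ball x\<^sub>0 \<rho>" for x
    using that ball(1) bump_eq_0[of "3 * \<rho> / 4" x x\<^sub>0] by (auto simp: \<psi>_def)
  then have "AE x in ?M. \<psi> x \<noteq> 0 \<longrightarrow> \<eta> \<le> \<mu> x \<and> \<eta> \<le> c x"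
    using lower unfolding AE_iff by (auto elim!: eventually_mono[OF eventually_conj])
  moreover have "AE x in ?M. 0 \<le> h x" using h(2) by (simp add: AE_iff)
  moreover have "- laplacian \<psi> x \<le> K * \<psi> x" for x
    using neg_laplacian_bump_le[of "3 * \<rho> / 4" x\<^sub>0 x] ball(1) by (simp add: \<psi>_def K_def)
  moreover have "K > 0" unfolding K_def using ball(1) by (intro bump_lap_const_pos) auto
  ultimately have "(\<integral>x. exp (\<eta> * u x) * \<psi> x \<partial>?M) \<le> 2 * exp (4 * K / (\<Lambda>\<^sub>1 * \<eta>)) * (\<integral>x. \<psi> x \<partial>?M)"
    using weak_solution_exp_integral_le[OF H weak u \<mu> c h(1) _ \<psi>] \<eta> lam by blast
  moreover have "set_lebesgue_integral lebesgue (ball x\<^sub>0 (\<rho> / 2)) (\<lambda>x. exp (\<eta> * u x))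
      \<le> (\<integral>x. exp (\<eta> * u x) * \<psi> x \<partial>?M) / exp (- 16 / (5 * \<rho>\<^sup>2))"
  proof (rule set_integral_le_weighted)
    show "ball x\<^sub>0 (\<rho> / 2) \<subseteq> \<Omega>" using ball by (auto intro: order_trans[OF subset_ball])
    have [measurable]: "u \<in> borel_measurable ?M" using H unfolding H10_iff by blast
    show "integrable ?M (\<lambda>x. exp (\<eta> * u x))" "integrable ?M (\<lambda>x. exp (\<eta> * u x) * \<psi> x)"
      using integrable_exp_moments(1)[OF _ _ u, of "\<lambda>_. 1"]
        integrable_exp_moments(1)[OF _ test_function.borel_measurable[OF test_function.intro[OF \<psi>(1)]] u]
        \<psi>(2,3) \<eta> by auto
    show "\<psi> x \<ge> exp (- 16 / (5 * \<rho>\<^sup>2))" if "x \<in> ball x\<^sub>0 (\<rho> / 2)" for x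
      using bump_ge_on_half_ball[OF ball(1) that] by (simp add: \<psi>_def)
  qed (use \<psi>(2) in auto)
  ultimately show ?thesis by (smt (verit) divide_right_mono exp_gt_zero)
qed

lemma integrable_of_Lp_on:
  assumes "r \<ge> 1" "Lp_on r \<Omega> h"
  shows "integrable (lebesgue_on \<Omega>) h"
proof (rule Bochner_Integration.integrable_bound)
  show "integrable (lebesgue_on \<Omega>) (\<lambda>x. 1 + \<bar>h x\<bar> powr r)"
    using assms(2) unfolding Lp_on_def set_integrable_iff by auto
  show "h \<in> borel_measurable (lebesgue_on \<Omega>)"
    using assms(2) unfolding Lp_on_def set_borel_measurable_iff by auto
  have "\<bar>t\<bar> \<le> 1 + \<bar>t\<bar> powr r" for t :: real
  proof (cases "\<bar>t\<bar> \<le> 1")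
    case False
    then have "\<bar>t\<bar> powr 1 \<le> \<bar>t\<bar> powr r" using assms(1) by (intro powr_mono) auto
    then show ?thesis using False by simp
  qed (use powr_ge_zero[of "\<bar>t\<bar>" r] in linarith)
  then show "AE x in lebesgue_on \<Omega>. norm (h x) \<le> norm (1 + \<bar>h x\<bar> powr r)" by auto
qed

end

theorem lemma4:
  fixes \<Omega> :: "'a::euclidean_space set"
    and \<mu> c h :: "'a \<Rightarrow> real"
    and r \<eta> \<rho> \<Lambda>\<^sub>1 :: real and x\<^sub>0 :: 'a
  assumes dom: "C2_bounded_domain \<Omega>"
    and mu: "Linf_on \<Omega> \<mu>" and cc: "Linf_on \<Omega> c"
    and r: "r > max 1 (real DIM('a) / 2)" and hh: "Lp_on r \<Omega> h"
    and mu_nn: "AE x in lebesgue. x \<in> \<Omega> \<longrightarrow> \<mu> x \<ge> 0"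
    and c_nn: "AE x in lebesgue. x \<in> \<Omega> \<longrightarrow> c x \<ge> 0"
    and h_nn: "AE x in lebesgue. x \<in> \<Omega> \<longrightarrow> h x \<ge> 0"
    and mu_nz: "\<not> (AE x in lebesgue. x \<in> \<Omega> \<longrightarrow> \<mu> x = 0)"
    and c_nz: "\<not> (AE x in lebesgue. x \<in> \<Omega> \<longrightarrow> c x = 0)"
    and h_nz: "\<not> (AE x in lebesgue. x \<in> \<Omega> \<longrightarrow> h x = 0)"
    and x0: "x\<^sub>0 \<in> \<Omega>" and rho: "\<rho> > 0" and eta: "\<eta> > 0"
    and ball: "ball x\<^sub>0 \<rho> \<subseteq> \<Omega>"
    and mu_eta: "AE x in lebesgue. x \<in> ball x\<^sub>0 \<rho> \<longrightarrow> \<mu> x \<ge> \<eta>"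
    and c_eta: "AE x in lebesgue. x \<in> ball x\<^sub>0 \<rho> \<longrightarrow> c x \<ge> \<eta>"
    and Lam: "0 < \<Lambda>\<^sub>1" "\<Lambda>\<^sub>1 \<le> first_eigenvalue \<Omega> c"
  shows "\<exists>C>0. \<forall>lam\<in>{\<Lambda>\<^sub>1..first_eigenvalue \<Omega> c}. \<forall>u.
           is_solution \<Omega> \<mu> c h lam u \<and> (AE x in lebesgue. x \<in> \<Omega> \<longrightarrow> u x \<ge> 0) \<longrightarrow>
           set_lebesgue_integral lebesgue (ball x\<^sub>0 (\<rho>/2)) (\<lambda>x. exp (\<eta> * u x)) \<le> C"
proof -
  have "\<Omega> \<in> lmeasurable"
    using dom unfolding C2_bounded_domain_def by (auto intro: lmeasurable_open)
  then interpret finite_domain \<Omega>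
    by unfold_locales (simp_all only: fmeasurableD fmeasurableD2 infinity_ennreal_def not_False_eq_True flip: less_top)
  have h: "integrable (lebesgue_on \<Omega>) h" using integrable_of_Lp_on[OF _ hh] r by simp
  define C where "C = 2 * exp (4 * bump_lap_const (3 * \<rho> / 4) (real DIM('a)) / (\<Lambda>\<^sub>1 * \<eta>))
    * (\<integral>x. bump x\<^sub>0 (3 * \<rho> / 4) x \<partial>lebesgue_on \<Omega>) / exp (- 16 / (5 * \<rho>\<^sup>2)) + 1"
  have "0 \<le> (\<integral>x. bump x\<^sub>0 (3 * \<rho> / 4) x \<partial>lebesgue_on \<Omega>)" by (simp add: bump_nonneg)
  then have "C > 0" unfolding C_def by (intro add_nonneg_pos) simp_all
  moreover have "set_lebesgue_integral lebesgue (ball x\<^sub>0 (\<rho>/2)) (\<lambda>x. exp (\<eta> * u x)) \<le> C"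
    if "lam \<in> {\<Lambda>\<^sub>1..first_eigenvalue \<Omega> c}" "is_solution \<Omega> \<mu> c h lam u" "AE x in lebesgue. x \<in> \<Omega> \<longrightarrow> u x \<ge> 0" for lam u
    using solution_exp_integral_le[OF that(2,3) mu cc h h_nn rho ball mu_eta c_eta eta _ Lam(1)] that(1)
    unfolding C_def by simp
  ultimately show ?thesis by blast
qed

end
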